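(* Consider problem (P): $\min_{x\in H} f(x)+g(x)+\sum_{i=1}^m h_i(B_ix)$ under the standing assumptions below. Let $w_1,\dots,w_m\in(0,1)$ with $\sum_{i=1}^m w_i=1$, let $\gamma\in(0,2/L)$ and let $\sigma,\tau>0$ satisfy $\sigma\tau<1/\sum_{i=1}^m w_i\|B_i\|^2$. Given arbitrary $x^0\in H$ and $y_i^0\in G_i$ ($i=1,\dots,m$), define for $k\ge0$ $$x^{k+1}=\operatorname{prox}_{\frac{\tau\gamma}{1+\tau}g}\Big(\frac{x^k-\tau\sum_{i=1}^m w_iB_i^*y_i^k+\tau\big(x^k-\gamma\nabla f(x^k)\big)}{1+\tau}\Big),$$ $$y_i^{k+1}=\frac{\gamma}{w_i}\operatorname{prox}_{w_i\frac{\sigma}{\gamma}h_i^*}\Big(\frac{w_i}{\gamma}\big(y_i^k+\sigma B_i(2x^{k+1}-x^k)\big)\Big),\quad i=1,\dots,m.$$ Then $\{x^k\}$ converges weakly to a solution of (P).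
   Context: Standing assumptions: $H$ and $G_1,\dots,G_m$ are real Hilbert spaces; $f:H\to\mathbb R$ is convex and differentiable with $L$-Lipschitz continuous gradient for some $L\in(0,\infty)$; $g\in\Gamma_0(H)$; $h_i\in\Gamma_0(G_i)$ and $B_i:H\to G_i$ is a bounded linear operator for each $i$; there exists $\hat x\in H$ with $0\in\nabla f(\hat x)+\partial g(\hat x)+\sum_{i=1}^m B_i^*\partial h_i(B_i\hat x)$. $\Gamma_0(X)$ is the set of proper lsc convex functions on $X$; $\operatorname{prox}_{\lambda\varphi}(u)=\arg\min_x\{\tfrac12\|x-u\|^2+\lambda\varphi(x)\}$; $\varphi^*$ is the Fenchel conjugate; $B_i^*$ is the adjoint of $B_i$ and $\|B_i\|$ its operator norm. *)

theory Defs
  imports "HOL-Analysis.Analysis"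
begin

text \<open>Extended-real-valued functions on a closed subspace S of a real Hilbert space.
  All notions are relative to the carrier S (S = UNIV for the space itself).\<close>

definition proper_on :: "'a set \<Rightarrow> ('a \<Rightarrow> ereal) \<Rightarrow> bool" where
  "proper_on S \<phi> \<longleftrightarrow> (\<forall>x\<in>S. \<phi> x \<noteq> -\<infinity>) \<and> (\<exists>x\<in>S. \<phi> x \<noteq> \<infinity>)"

definition lsc_on :: "'a::metric_space set \<Rightarrow> ('a \<Rightarrow> ereal) \<Rightarrow> bool" where
  "lsc_on S \<phi> \<longleftrightarrow> (\<forall>x\<in>S. \<forall>s. (\<forall>k. s k \<in> S) \<longrightarrow> s \<longlonglongrightarrow> x \<longrightarrow>
      \<phi> x \<le> liminf (\<lambda>k. \<phi> (s k)))"

definition convex_ereal_on :: "'a::real_vector set \<Rightarrow> ('a \<Rightarrow> ereal) \<Rightarrow> bool" where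
  "convex_ereal_on S \<phi> \<longleftrightarrow> (\<forall>x\<in>S. \<forall>y\<in>S. \<forall>t::real. 0 < t \<and> t < 1 \<longrightarrow>
      \<phi> ((1 - t) *\<^sub>R x + t *\<^sub>R y) \<le> ereal (1 - t) * \<phi> x + ereal t * \<phi> y)"

definition Gamma0_on :: "'a::real_normed_vector set \<Rightarrow> ('a \<Rightarrow> ereal) \<Rightarrow> bool" where
  "Gamma0_on S \<phi> \<longleftrightarrow> proper_on S \<phi> \<and> lsc_on S \<phi> \<and> convex_ereal_on S \<phi>"

definition prox_on :: "'a::real_normed_vector set \<Rightarrow> real \<Rightarrow> ('a \<Rightarrow> ereal) \<Rightarrow> 'a \<Rightarrow> 'a" where
  "prox_on S lam \<phi> u = (THE p. p \<in> S \<and> (\<forall>z\<in>S.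
      ereal (norm (p - u)^2 / 2) + ereal lam * \<phi> p \<le> ereal (norm (z - u)^2 / 2) + ereal lam * \<phi> z))"

definition conj_on :: "'a::real_inner set \<Rightarrow> ('a \<Rightarrow> ereal) \<Rightarrow> 'a \<Rightarrow> ereal" where
  "conj_on S \<phi> y = (SUP x\<in>S. ereal (inner x y) - \<phi> x)"

definition subdiff_on :: "'a::real_inner set \<Rightarrow> ('a \<Rightarrow> ereal) \<Rightarrow> 'a \<Rightarrow> 'a set" where
  "subdiff_on S \<phi> x = {v \<in> S. \<phi> x \<noteq> \<infinity> \<and> \<phi> x \<noteq> -\<infinity> \<and>
      (\<forall>z\<in>S. \<phi> x + ereal (inner v (z - x)) \<le> \<phi> z)}"

definition weakly_converges :: "(nat \<Rightarrow> 'a::real_inner) \<Rightarrow> 'a \<Rightarrow> bool" where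
  "weakly_converges s l \<longleftrightarrow> (\<forall>v. (\<lambda>k. inner (s k) v) \<longlonglongrightarrow> inner l v)"

end

theory Submission
  imports Defs "HOL-Library.Diagonal_Subsequence"
begin

text \<open>Put \<open>v k i = (w i / \<gamma>) y k i\<close>; then the iteration is a primal-dual proximal splitting method
  with step sizes \<open>t = \<tau>\<gamma> / (1 + \<tau>)\<close> and \<open>s i = w i \<sigma> / \<gamma>\<close>.  The step size conditions make the
  quadratic form \<open>||d||\<^sup>2 / t + \<Sum>i (||e i||\<^sup>2 / s i - 2 \<langle>e i, B i d\<rangle>)\<close> coercive even after subtracting
  \<open>L/2 ||d||\<^sup>2\<close>.  Measured in this metric, the distance of \<open>(x k, v k)\<close> to any KKT point decreases
  by at least a coercive function of the increments (monotonicity of the subdifferentials and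
  cocoercivity of \<open>\<nabla>f\<close>), so the iterates are bounded and the increments tend to \<open>0\<close>.  Testing the
  monotone inclusion against resolvent points shows that every weak cluster point is a KKT point, and
  Opial's argument shows that there is only one.  KKT points minimize the objective.\<close>

section \<open>Proper lower semicontinuous convex functions\<close>

lemma Gamma0_on_not_MInf: "Gamma0_on S \<phi> \<Longrightarrow> x \<in> S \<Longrightarrow> \<phi> x \<noteq> -\<infinity>"
  unfolding Gamma0_on_def proper_on_def by auto

lemma Gamma0_on_ex_finite: "Gamma0_on S \<phi> \<Longrightarrow> \<exists>x\<in>S. \<phi> x \<noteq> \<infinity>"
  unfolding Gamma0_on_def proper_on_def by auto

lemma Gamma0_on_convex_le:
  assumes "Gamma0_on S \<phi>" "x \<in> S" "y \<in> S" "0 < t" "t < 1" "\<phi> x \<le> ereal a" "\<phi> y \<le> ereal b"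
  shows "\<phi> ((1 - t) *\<^sub>R x + t *\<^sub>R y) \<le> ereal ((1 - t) * a + t * b)"
proof -
  have "\<phi> ((1 - t) *\<^sub>R x + t *\<^sub>R y) \<le> ereal (1 - t) * \<phi> x + ereal t * \<phi> y"
    using assms unfolding Gamma0_on_def convex_ereal_on_def by auto
  also have "\<dots> \<le> ereal (1 - t) * ereal a + ereal t * ereal b"
    using assms by (intro add_mono ereal_mult_left_mono) auto
  finally show ?thesis by simp
qed

lemma Gamma0_on_lsc_le:
  assumes "Gamma0_on S \<phi>" "x \<in> S" "\<And>k. s k \<in> S" "s \<longlonglongrightarrow> x"
    "\<And>k. \<phi> (s k) \<le> ereal (c k)" "c \<longlonglongrightarrow> c0"
  shows "\<phi> x \<le> ereal c0"
proof -
  have "\<phi> x \<le> liminf (\<lambda>k. \<phi> (s k))" using assms unfolding Gamma0_on_def lsc_on_def by blast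
  also have "\<dots> \<le> liminf (\<lambda>k. ereal (c k))" by (intro Liminf_mono) (use assms in auto)
  also have "\<dots> = ereal c0" using assms(6) by (intro lim_imp_Liminf tendsto_ereal) auto
  finally show ?thesis .
qed

lemma Gamma0_on_locally_bounded_below:
  assumes G: "Gamma0_on S \<phi>" and x0: "x0 \<in> S" "\<phi> x0 = ereal c0"
  shows "\<exists>\<delta>>0. \<forall>z\<in>S. norm (z - x0) < \<delta> \<longrightarrow> ereal (c0 - 1) \<le> \<phi> z"
proof (rule ccontr)
  assume "\<not> ?thesis"
  then have "\<forall>n::nat. \<exists>z\<in>S. norm (z - x0) < 1 / real (Suc n) \<and> \<phi> z < ereal (c0 - 1)"
    by (metis not_le of_nat_0_less_iff zero_less_Suc divide_pos_pos zero_less_one)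
  then obtain zs where zs: "\<And>n. zs n \<in> S" "\<And>n. norm (zs n - x0) < 1 / real (Suc n)"
    "\<And>n. \<phi> (zs n) < ereal (c0 - 1)" by metis
  have "(\<lambda>n. zs n - x0) \<longlonglongrightarrow> 0" using zs(2) by (rule LIMSEQ_norm_0)
  then have lim: "zs \<longlonglongrightarrow> x0" using Lim_null by blast
  have "\<phi> x0 \<le> ereal (c0 - 1)"
    by (rule Gamma0_on_lsc_le[OF G x0(1) zs(1) lim, of "\<lambda>_. c0 - 1"])
       (use zs(3) in \<open>auto intro: less_imp_le\<close>)
  then show False using x0(2) by simp
qed

text \<open>Convexity propagates the local bound at \<open>x0\<close> along rays, which gives an affine minorant
  in \<open>norm z\<close>.\<close>
lemma Gamma0_on_norm_minorant:
  fixes \<phi> :: "'a::real_normed_vector \<Rightarrow> ereal"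
  assumes G: "Gamma0_on S \<phi>" and S: "convex S"
  shows "\<exists>\<alpha> \<beta>. \<beta> \<ge> 0 \<and> (\<forall>z\<in>S. ereal (\<alpha> - \<beta> * norm z) \<le> \<phi> z)"
proof -
  obtain x0 where x0: "x0 \<in> S" "\<phi> x0 \<noteq> \<infinity>" using Gamma0_on_ex_finite[OF G] by blast
  then obtain c0 where c0: "\<phi> x0 = ereal c0" using Gamma0_on_not_MInf[OF G] by (cases "\<phi> x0") auto
  obtain \<delta> where d: "\<delta> > 0" "\<And>z. z \<in> S \<Longrightarrow> norm (z - x0) < \<delta> \<Longrightarrow> ereal (c0 - 1) \<le> \<phi> z"
    using Gamma0_on_locally_bounded_below[OF G x0(1) c0] by blast
  define \<alpha> where "\<alpha> = c0 - 1 - 2 * norm x0 / \<delta>"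
  define \<beta> where "\<beta> = 2 / \<delta>"
  have "ereal (\<alpha> - \<beta> * norm z) \<le> \<phi> z" if z: "z \<in> S" for z
  proof (cases "\<phi> z")
    case (real \<zeta>)
    have nb: "\<beta> * norm z + 2 * norm x0 / \<delta> \<ge> 0" using d(1) unfolding \<beta>_def by auto
    show ?thesis
    proof (cases "norm (z - x0) < \<delta>")
      case True
      then have "c0 - 1 \<le> \<zeta>" using d(2)[OF z] real by auto
      then show ?thesis using real nb unfolding \<alpha>_def by auto
    next
      case False
      define \<theta> where "\<theta> = \<delta> / (2 * norm (z - x0))"
      have nz: "norm (z - x0) > 0" using False d(1) by auto
      have th: "0 < \<theta>" "\<theta> < 1" using nz d(1) False unfolding \<theta>_def by (auto simp: field_simps)
      define p where "p = (1 - \<theta>) *\<^sub>R x0 + \<theta> *\<^sub>R z"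
      have pS: "p \<in> S" unfolding p_def using th by (intro convexD[OF S x0(1) z]) auto
      have "p - x0 = \<theta> *\<^sub>R (z - x0)" unfolding p_def by (simp add: algebra_simps)
      then have "norm (p - x0) = \<delta> / 2" unfolding \<theta>_def using d(1) nz by simp
      then have "ereal (c0 - 1) \<le> \<phi> p" using d pS by simp
      moreover have "\<phi> p \<le> ereal ((1 - \<theta>) * c0 + \<theta> * \<zeta>)" unfolding p_def
        by (rule Gamma0_on_convex_le[OF G x0(1) z th]) (use c0 real in auto)
      ultimately have "c0 - 1 \<le> (1 - \<theta>) * c0 + \<theta> * \<zeta>" by (metis ereal_less_eq(3) order_trans)
      then have "c0 - 1 / \<theta> \<le> \<zeta>" using th by (simp add: field_simps)
      moreover have "1 / \<theta> \<le> 2 * (norm z + norm x0) / \<delta>"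
        using norm_triangle_ineq4[of z x0] d(1) unfolding \<theta>_def by (simp add: divide_right_mono)
      ultimately show ?thesis using real unfolding \<alpha>_def \<beta>_def
        by (simp add: field_simps add_divide_distrib)
    qed
  qed (use Gamma0_on_not_MInf[OF G z] in auto)
  moreover have "\<beta> \<ge> 0" using d(1) unfolding \<beta>_def by simp
  ultimately show ?thesis by blast
qed

lemma subdiff_on_monotone:
  assumes "\<alpha> \<in> subdiff_on S \<phi> a" "\<beta> \<in> subdiff_on S \<phi> b" "a \<in> S" "b \<in> S"
  shows "0 \<le> inner (\<alpha> - \<beta>) (a - b)"
proof -
  obtain A where A: "\<phi> a = ereal A" using assms(1) unfolding subdiff_on_def by (cases "\<phi> a") auto
  obtain C where C: "\<phi> b = ereal C" using assms(2) unfolding subdiff_on_def by (cases "\<phi> b") auto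
  have "\<phi> a + ereal (inner \<alpha> (b - a)) \<le> \<phi> b" "\<phi> b + ereal (inner \<beta> (a - b)) \<le> \<phi> a"
    using assms unfolding subdiff_on_def by auto
  then have "A + inner \<alpha> (b - a) \<le> C" "C + inner \<beta> (a - b) \<le> A" using A C by simp_all
  then show ?thesis by (simp add: inner_diff_left inner_diff_right)
qed

section \<open>Proximal maps\<close>

lemma norm_add_power2_inner: "norm (a + b)^2 = norm a^2 + 2 * inner a b + norm b^2"
  for a b :: "'a::real_inner"
  by (simp add: power2_norm_eq_inner inner_add_left inner_add_right inner_commute)

lemma norm_diff_power2_inner: "norm (a - b)^2 = norm a^2 - 2 * inner a b + norm b^2"
  for a b :: "'a::real_inner"
  by (simp add: power2_norm_eq_inner inner_diff_left inner_diff_right inner_commute)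

lemma norm_convex_combination_power2:
  fixes a b u :: "'a::real_inner"
  shows "norm ((1 - t) *\<^sub>R a + t *\<^sub>R b - u)^2
     = (1 - t) * norm (a - u)^2 + t * norm (b - u)^2 - t * (1 - t) * norm (a - b)^2"
proof -
  define c d where "c = a - u" and "d = b - u"
  have "(1 - t) *\<^sub>R a + t *\<^sub>R b - u = (1 - t) *\<^sub>R c + t *\<^sub>R d"
    unfolding c_def d_def by (simp add: algebra_simps)
  moreover have "a - b = c - d" unfolding c_def d_def by simp
  ultimately show ?thesis
    unfolding power2_norm_eq_inner c_def[symmetric] d_def[symmetric]
    by (simp add: inner_add_left inner_add_right inner_diff_left inner_diff_right inner_commute)
       (simp add: algebra_simps)
qed

lemma Cauchy_if_norm_power2_le:
  fixes z :: "nat \<Rightarrow> 'a::real_normed_vector"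
  assumes le: "\<And>m n. norm (z m - z n)^2 \<le> c m + c n" and c: "c \<longlonglongrightarrow> 0"
  shows "Cauchy z"
proof (rule metric_CauchyI)
  fix e :: real assume e: "e > 0"
  have "e^2 / 2 > 0" using e by simp
  from LIMSEQ_D[OF c this] obtain N where N: "\<And>n. n \<ge> N \<Longrightarrow> \<bar>c n\<bar> < e^2 / 2"
    by auto
  have "dist (z m) (z n) < e" if "m \<ge> N" "n \<ge> N" for m n
  proof -
    have "norm (z m - z n)^2 < e^2" using le[of m n] N[OF that(1)] N[OF that(2)] by linarith
    then show ?thesis unfolding dist_norm using e by (simp add: power_less_imp_less_base)
  qed
  then show "\<exists>N. \<forall>m\<ge>N. \<forall>n\<ge>N. dist (z m) (z n) < e" by blast
qed

lemma prox_objective_bdd_below: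
  fixes \<phi> :: "'a::real_normed_vector \<Rightarrow> ereal"
  assumes G: "Gamma0_on S \<phi>" and S: "convex S" and lam: "0 < lam"
  shows "\<exists>K. \<forall>z\<in>S. ereal K \<le> ereal (norm (z - u)^2 / 2) + ereal lam * \<phi> z"
proof -
  obtain \<alpha> \<beta> where minor: "\<And>z. z \<in> S \<Longrightarrow> ereal (\<alpha> - \<beta> * norm z) \<le> \<phi> z"
    using Gamma0_on_norm_minorant[OF G S] by blast
  define K where "K = lam * \<alpha> + (norm u^2 - (norm u + lam * \<beta>)^2) / 2"
  have "ereal K \<le> ereal (norm (z - u)^2 / 2) + ereal lam * \<phi> z" if z: "z \<in> S" for z
  proof (cases "\<phi> z")
    case (real \<zeta>)
    have "\<alpha> - \<beta> * norm z \<le> \<zeta>" using minor[OF z] real by simp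
    from mult_left_mono[OF this less_imp_le[OF lam]]
    have "lam * \<alpha> - lam * \<beta> * norm z \<le> lam * \<zeta>" by (simp add: right_diff_distrib mult.assoc)
    moreover have "(norm z - norm u)^2 \<le> norm (z - u)^2"
      using norm_triangle_ineq3[of z u] by (metis abs_ge_zero power2_abs power_mono)
    moreover have "(norm z - norm u)^2 / 2 - lam * \<beta> * norm z - (norm u^2 - (norm u + lam * \<beta>)^2) / 2
        = (norm z - norm u - lam * \<beta>)^2 / 2"
      by (simp add: power2_eq_square field_simps)
    moreover have "0 \<le> (norm z - norm u - lam * \<beta>)^2 / 2" by simp
    ultimately have "K \<le> norm (z - u)^2 / 2 + lam * \<zeta>" unfolding K_def by linarith
    then show ?thesis using real by simp
  next
    case PInf
    then show ?thesis using lam by simp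
  qed (use Gamma0_on_not_MInf[OF G z] in simp)
  then show ?thesis by blast
qed

lemma prox_objective_midpoint:
  fixes \<phi> :: "'a::real_inner \<Rightarrow> ereal"
  assumes G: "Gamma0_on S \<phi>" and S: "convex S" and lam: "0 < lam"
    and a: "a \<in> S" "\<phi> a = ereal \<alpha>" and b: "b \<in> S" "\<phi> b = ereal \<beta>"
  shows "\<exists>\<gamma>. midpoint a b \<in> S \<and> \<phi> (midpoint a b) = ereal \<gamma> \<and>
    norm (midpoint a b - u)^2 / 2 + lam * \<gamma>
      \<le> ((norm (a - u)^2 / 2 + lam * \<alpha>) + (norm (b - u)^2 / 2 + lam * \<beta>)) / 2 - norm (a - b)^2 / 8"
proof -
  have c: "midpoint a b = (1 - 1/2) *\<^sub>R a + (1/2::real) *\<^sub>R b"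
    unfolding midpoint_def by (simp add: scaleR_add_right)
  have "\<phi> (midpoint a b) \<le> ereal ((1 - 1/2) * \<alpha> + (1/2) * \<beta>)"
    unfolding c by (rule Gamma0_on_convex_le[OF G a(1) b(1)]) (simp_all add: a b)
  moreover have cS: "midpoint a b \<in> S" unfolding c using a b by (intro convexD[OF S]) auto
  ultimately obtain \<gamma> where \<gamma>: "\<phi> (midpoint a b) = ereal \<gamma>" "\<gamma> \<le> (\<alpha> + \<beta>) / 2"
    using Gamma0_on_not_MInf[OF G cS] by (cases "\<phi> (midpoint a b)") auto
  from mult_left_mono[OF \<gamma>(2) less_imp_le[OF lam]]
  have "lam * \<gamma> \<le> lam * \<alpha> / 2 + lam * \<beta> / 2" by (simp add: field_simps)
  moreover have "norm (midpoint a b - u)^2 = (norm (a - u)^2 + norm (b - u)^2) / 2 - norm (a - b)^2 / 4"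
    unfolding c norm_convex_combination_power2 by simp
  ultimately have "norm (midpoint a b - u)^2 / 2 + lam * \<gamma>
      \<le> ((norm (a - u)^2 / 2 + lam * \<alpha>) + (norm (b - u)^2 / 2 + lam * \<beta>)) / 2 - norm (a - b)^2 / 8"
    by argo
  then show ?thesis using cS \<gamma>(1) by blast
qed

text \<open>The objective is strongly convex, so a minimizing sequence is Cauchy (midpoint argument);
  lower semicontinuity makes its limit a minimizer.\<close>
lemma prox_on_minimizer_exists:
  fixes \<phi> :: "'a::{real_inner,complete_space} \<Rightarrow> ereal"
  assumes G: "Gamma0_on S \<phi>" and S: "convex S" "closed S" and lam: "0 < lam"
  shows "\<exists>p\<in>S. \<phi> p \<noteq> \<infinity> \<and> (\<forall>z\<in>S. ereal (norm (p - u)^2 / 2) + ereal lam * \<phi> p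
            \<le> ereal (norm (z - u)^2 / 2) + ereal lam * \<phi> z)"
proof -
  define D where "D = {z\<in>S. \<phi> z \<noteq> \<infinity>}"
  define \<psi> where "\<psi> z = real_of_ereal (\<phi> z)" for z
  define F where "F z = norm (z - u)^2 / 2 + lam * \<psi> z" for z
  have \<psi>: "\<phi> z = ereal (\<psi> z)" if "z \<in> D" for z
    using that Gamma0_on_not_MInf[OF G] unfolding D_def \<psi>_def by (cases "\<phi> z") auto
  obtain K where K: "\<And>z. z \<in> S \<Longrightarrow> ereal K \<le> ereal (norm (z - u)^2 / 2) + ereal lam * \<phi> z"
    using prox_objective_bdd_below[OF G S(1) lam] by blast
  have "K \<le> F z" if "z \<in> D" for z
    using K[of z] \<psi>[OF that] that unfolding D_def F_def by simp
  then have bdd: "bdd_below (F ` D)" by (rule bdd_belowI2)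
  define I where "I = Inf (F ` D)"
  have I_le: "I \<le> F z" if "z \<in> D" for z unfolding I_def using bdd that by (auto intro: cInf_lower)
  have "D \<noteq> {}" using Gamma0_on_ex_finite[OF G] unfolding D_def by auto
  then have "\<exists>z\<in>D. F z < I + inverse (real (Suc n))" for n
  proof -
    have "I < I + inverse (real (Suc n))" by simp
    then show ?thesis unfolding I_def using \<open>D \<noteq> {}\<close> bdd by (subst (asm) cInf_less_iff) auto
  qed
  then obtain zs where zs: "\<And>n. zs n \<in> D" "\<And>n. F (zs n) < I + inverse (real (Suc n))" by metis
  have midpoint: "norm (a - b)^2 \<le> 4 * (F a - I) + 4 * (F b - I)" if ab: "a \<in> D" "b \<in> D" for a b
  proof -
    have "a \<in> S" "b \<in> S" using ab unfolding D_def by auto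
    then obtain \<gamma> where c: "midpoint a b \<in> S" "\<phi> (midpoint a b) = ereal \<gamma>"
      "norm (midpoint a b - u)^2 / 2 + lam * \<gamma> \<le> (F a + F b) / 2 - norm (a - b)^2 / 8"
      using prox_objective_midpoint[OF G S(1) lam _ \<psi>[OF ab(1)] _ \<psi>[OF ab(2)], of u]
      unfolding F_def by auto
    then have cD: "midpoint a b \<in> D" unfolding D_def by simp
    then have "F (midpoint a b) \<le> (F a + F b) / 2 - norm (a - b)^2 / 8"
      using c(2,3) \<psi>[OF cD] unfolding F_def by simp
    then show ?thesis using I_le[OF cD] by argo
  qed
  have "norm (zs m - zs n)^2 \<le> 4 * inverse (real (Suc m)) + 4 * inverse (real (Suc n))" for m n
    using midpoint[OF zs(1) zs(1), of m n] zs(2)[of m] zs(2)[of n] by argo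
  moreover have "(\<lambda>n. 4 * inverse (real (Suc n))) \<longlonglongrightarrow> 0"
    using tendsto_mult_right_zero[OF LIMSEQ_inverse_real_of_nat] by simp
  ultimately have "Cauchy zs" by (rule Cauchy_if_norm_power2_le)
  then obtain p where lim: "zs \<longlonglongrightarrow> p" using Cauchy_convergent convergent_def by blast
  have pS: "p \<in> S" using closed_sequentially[OF S(2)] zs(1) lim unfolding D_def by auto
  have bnd: "\<phi> (zs n) \<le> ereal ((I + inverse (real (Suc n)) - norm (zs n - u)^2/2) / lam)" for n
  proof -
    have "lam * \<psi> (zs n) \<le> I + inverse (real (Suc n)) - norm (zs n - u)^2/2"
      using zs(2)[of n] unfolding F_def by simp
    then have "\<psi> (zs n) \<le> (I + inverse (real (Suc n)) - norm (zs n - u)^2/2) / lam"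
      using lam by (simp add: pos_le_divide_eq mult.commute)
    then show ?thesis using \<psi>[OF zs(1)] by simp
  qed
  have "(\<lambda>n. (I + inverse (real (Suc n)) - norm (zs n - u)^2/2) / lam)
      \<longlonglongrightarrow> (I + 0 - norm (p - u)^2/2) / lam"
    by (intro tendsto_intros LIMSEQ_inverse_real_of_nat lim) (use lam in auto)
  then have p_le: "\<phi> p \<le> ereal ((I - norm (p - u)^2/2) / lam)"
    using Gamma0_on_lsc_le[OF G pS _ lim bnd] zs(1) unfolding D_def by simp
  then have pD: "p \<in> D" using pS unfolding D_def by auto
  have "\<psi> p \<le> (I - norm (p - u)^2/2) / lam" using p_le \<psi>[OF pD] by simp
  then have "F p \<le> I" unfolding F_def using lam by (simp add: field_simps)
  have "ereal (norm (p - u)^2 / 2) + ereal lam * \<phi> p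
            \<le> ereal (norm (z - u)^2 / 2) + ereal lam * \<phi> z" if z: "z \<in> S" for z
  proof (cases "z \<in> D")
    case True
    then show ?thesis using \<open>F p \<le> I\<close> I_le[OF True] \<psi>[OF True] \<psi>[OF pD] unfolding F_def by simp
  next
    case False
    then show ?thesis using z \<psi>[OF pD] lam unfolding D_def by simp
  qed
  then show ?thesis using pD unfolding D_def by blast
qed

lemma prox_on_eqI:
  fixes \<phi> :: "'a::real_inner \<Rightarrow> ereal"
  assumes lam: "0 < lam" and pS: "p \<in> S" and pa: "\<phi> p = ereal a"
    and H: "\<And>z. z \<in> S \<Longrightarrow> ereal (a + inner (u - p) (z - p) / lam) \<le> \<phi> z"
  shows "prox_on S lam \<phi> u = p"
proof -
  define F where "F z = ereal (norm (z - u)^2 / 2) + ereal lam * \<phi> z" for z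
  have Fp: "F p = ereal (norm (p - u)^2/2 + lam * a)" unfolding F_def pa by simp
  have growth: "ereal (norm (p - u)^2/2 + lam * a + norm (z - p)^2/2) \<le> F z" if z: "z \<in> S" for z
  proof (cases "\<phi> z")
    case (real b)
    have "a + inner (u - p) (z - p) / lam \<le> b" using H[OF z] real by simp
    then have 1: "lam * a + inner (u - p) (z - p) \<le> lam * b" using lam by (simp add: field_simps)
    have 2: "norm (z - u)^2 = norm (z - p)^2 + 2 * inner (z - p) (p - u) + norm (p - u)^2"
      using norm_add_power2_inner[of "z - p" "p - u"] by simp
    have 3: "inner (z - p) (p - u) = - inner (u - p) (z - p)"
      by (simp add: inner_diff_left inner_diff_right inner_commute)
    have "norm (p - u)^2/2 + lam * a + norm (z - p)^2/2 \<le> norm (z - u)^2 / 2 + lam * b"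
      using 1 2 3 by argo
    then show ?thesis unfolding F_def using real by simp
  next
    case PInf then show ?thesis unfolding F_def using lam by simp
  next
    case MInf then show ?thesis using H[OF z] by simp
  qed
  have P: "p \<in> S \<and> (\<forall>z\<in>S. F p \<le> F z)"
  proof (intro conjI ballI pS)
    fix z assume z: "z \<in> S"
    have "F p \<le> ereal (norm (p - u)^2/2 + lam * a + norm (z - p)^2/2)" unfolding Fp by simp
    also have "\<dots> \<le> F z" by (rule growth[OF z])
    finally show "F p \<le> F z" .
  qed
  show ?thesis unfolding prox_on_def F_def[symmetric]
  proof (rule the_equality)
    show "p \<in> S \<and> (\<forall>z\<in>S. F p \<le> F z)" by (rule P)
  next
    fix q assume q: "q \<in> S \<and> (\<forall>z\<in>S. F q \<le> F z)"
    have "ereal (norm (p - u)^2/2 + lam * a + norm (q - p)^2/2) \<le> F p"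
      using growth[of q] q P by (meson order_trans)
    then have "norm (q - p)^2 \<le> 0" unfolding Fp by simp
    then show "q = p" by simp
  qed
qed

text \<open>Otherwise moving from the minimizer \<open>p\<close> a small step \<open>t\<close> towards \<open>z\<close> would decrease the
  objective.\<close>
lemma prox_objective_minimizer_ineq:
  fixes \<phi> :: "'a::real_inner \<Rightarrow> ereal"
  assumes G: "Gamma0_on S \<phi>" and S: "convex S" and lam: "0 < lam" and pS: "p \<in> S"
    and pa: "\<phi> p = ereal a"
    and min: "\<And>z. z\<in>S \<Longrightarrow> ereal (norm (p - u)^2 / 2) + ereal lam * \<phi> p
               \<le> ereal (norm (z - u)^2 / 2) + ereal lam * \<phi> z"
    and zS: "z \<in> S" and zb: "\<phi> z = ereal b"
  shows "lam * a + inner (u - p) (z - p) \<le> lam * b"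
proof (rule ccontr)
  assume neg: "\<not> ?thesis"
  define N where "N = norm (z - p)^2"
  define \<delta> where "\<delta> = inner (p - u) (z - p) + lam * (b - a)"
  have iu: "inner (u - p) (z - p) = - inner (p - u) (z - p)"
    by (simp add: inner_diff_left)
  have dneg: "\<delta> < 0" using neg iu unfolding \<delta>_def by (simp add: algebra_simps)
  have N0: "N \<ge> 0" unfolding N_def by simp
  define t where "t = min (1/2) (- \<delta> / (N + 1))"
  have t0: "0 < t" "t < 1" unfolding t_def using dneg N0 by (auto simp: divide_neg_pos)
  have "t \<le> (- \<delta>) / (N + 1)" unfolding t_def by (rule min.cobounded2)
  then have tN: "t * (N + 1) \<le> - \<delta>" using N0 by (subst (asm) pos_le_divide_eq) auto
  define zt where "zt = (1 - t) *\<^sub>R p + t *\<^sub>R z"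
  have ztS: "zt \<in> S" unfolding zt_def using t0 by (intro convexD[OF S pS zS]) auto
  have cz: "\<phi> zt \<le> ereal ((1 - t) * a + t * b)"
    unfolding zt_def by (rule Gamma0_on_convex_le[OF G pS zS t0]) (simp_all add: pa zb)
  obtain c where c: "\<phi> zt = ereal c" using cz Gamma0_on_not_MInf[OF G ztS] by (cases "\<phi> zt") auto
  have cle: "c \<le> (1 - t) * a + t * b" using cz c by simp
  have "norm (p - u)^2 / 2 + lam * a \<le> norm (zt - u)^2 / 2 + lam * c"
    using min[OF ztS] pa c by simp
  moreover have e: "zt - u = (p - u) + t *\<^sub>R (z - p)" unfolding zt_def by (simp add: algebra_simps)
  have "norm (zt - u)^2 = norm (p - u)^2 + 2 * (t * inner (p - u) (z - p)) + t^2 * N"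
    unfolding e N_def norm_add_power2_inner by (simp add: power_mult_distrib)
  moreover have "lam * c \<le> lam * ((1 - t) * a + t * b)" using cle lam by (simp add: mult_left_mono)
  moreover have "lam * ((1 - t) * a + t * b) = lam * a + lam * t * (b - a)" by (simp add: algebra_simps)
  ultimately have "0 \<le> t * inner (p - u) (z - p) + t^2 * N / 2 + lam * t * (b - a)"
    by argo
  also have "\<dots> = t * (\<delta> + t * N / 2)" unfolding \<delta>_def by (simp add: algebra_simps power2_eq_square)
  finally have "0 \<le> \<delta> + t * N / 2" using t0 by (simp add: zero_le_mult_iff)
  moreover have "t * N / 2 < t * (N + 1)" using t0 N0 by (simp add: algebra_simps add_nonneg_pos mult_nonneg_nonneg)
  ultimately show False using tN dneg by argo
qed

lemma prox_on_variational_ineq: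
  fixes \<phi> :: "'a::{real_inner,complete_space} \<Rightarrow> ereal"
  assumes G: "Gamma0_on S \<phi>" and S: "convex S" "closed S" and lam: "0 < lam"
  shows "prox_on S lam \<phi> u \<in> S \<and> (\<exists>a. \<phi> (prox_on S lam \<phi> u) = ereal a \<and>
     (\<forall>z\<in>S. ereal (a + inner (u - prox_on S lam \<phi> u) (z - prox_on S lam \<phi> u) / lam) \<le> \<phi> z))"
proof -
  obtain p where p: "p \<in> S" "\<phi> p \<noteq> \<infinity>" and min: "\<And>z. z\<in>S \<Longrightarrow> ereal (norm (p - u)^2 / 2) + ereal lam * \<phi> p
            \<le> ereal (norm (z - u)^2 / 2) + ereal lam * \<phi> z"
    using prox_on_minimizer_exists[OF G S lam, of u] by blast
  obtain a where pa: "\<phi> p = ereal a" using p Gamma0_on_not_MInf[OF G p(1)] by (cases "\<phi> p") auto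
  have H: "ereal (a + inner (u - p) (z - p) / lam) \<le> \<phi> z" if z: "z \<in> S" for z
  proof (cases "\<phi> z")
    case (real b)
    have "lam * a + inner (u - p) (z - p) \<le> lam * b"
      by (rule prox_objective_minimizer_ineq[OF G S(1) lam p(1) pa min z real]) auto
    then have "a + inner (u - p) (z - p) / lam \<le> b" using lam by (simp add: field_simps)
    then show ?thesis using real by simp
  qed (use Gamma0_on_not_MInf[OF G z] in auto)
  have "prox_on S lam \<phi> u = p" by (rule prox_on_eqI[OF lam p(1) pa H])
  then show ?thesis using p(1) pa H by auto
qed

lemma prox_on_subdiff:
  fixes \<phi> :: "'a::{real_inner,complete_space} \<Rightarrow> ereal"
  assumes G: "Gamma0_on S \<phi>" and S: "subspace S" "closed S" and lam: "0 < lam" and u: "u \<in> S"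
  shows "prox_on S lam \<phi> u \<in> S \<and> (1 / lam) *\<^sub>R (u - prox_on S lam \<phi> u) \<in> subdiff_on S \<phi> (prox_on S lam \<phi> u)"
proof -
  define p where "p = prox_on S lam \<phi> u"
  obtain a where pS: "p \<in> S" and pa: "\<phi> p = ereal a"
    and H: "\<And>z. z\<in>S \<Longrightarrow> ereal (a + inner (u - p) (z - p) / lam) \<le> \<phi> z"
    using prox_on_variational_ineq[OF G subspace_imp_convex[OF S(1)] S(2) lam, of u] unfolding p_def by blast
  have vS: "(1 / lam) *\<^sub>R (u - p) \<in> S" using S(1) u pS by (intro subspace_scale subspace_diff) auto
  have "(1 / lam) *\<^sub>R (u - p) \<in> subdiff_on S \<phi> p"
    unfolding subdiff_on_def using vS pa H by (auto simp: divide_inverse mult.commute)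
  then show ?thesis using pS unfolding p_def by simp
qed

lemma conj_on_ge:
  assumes "p \<in> V" "h p = ereal a"
  shows "ereal (inner p z - a) \<le> conj_on V h z"
proof -
  have "ereal (inner p z) - h p \<le> (SUP x\<in>V. ereal (inner x z) - h x)"
    using assms(1) by (rule SUP_upper)
  then show ?thesis unfolding conj_on_def using assms(2) by simp
qed

lemma conj_on_subdiff_eq:
  assumes G: "Gamma0_on V h" and p: "p \<in> V" "h p = ereal a" and q: "q \<in> subdiff_on V h p"
  shows "conj_on V h q = ereal (inner p q - a)"
proof (rule antisym)
  show "conj_on V h q \<le> ereal (inner p q - a)"
    unfolding conj_on_def
  proof (rule SUP_least)
    fix x assume x: "x \<in> V"
    show "ereal (inner x q) - h x \<le> ereal (inner p q - a)"
    proof (cases "h x")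
      case (real b)
      have "a + inner q (x - p) \<le> b" using q x p(2) real unfolding subdiff_on_def by auto
      then show ?thesis using real by (simp add: inner_diff_right inner_commute)
    qed (use Gamma0_on_not_MInf[OF G x] in auto)
  qed
qed (rule conj_on_ge[of p V h a q, OF p])

text \<open>Moreau's decomposition: the prox of \<open>s h\<^sup>*\<close> at \<open>r\<close> is \<open>r - s p\<close>, where \<open>p\<close> is the prox of
  \<open>h / s\<close> at \<open>r / s\<close>.\<close>
lemma prox_conj_on_Moreau:
  fixes h :: "'a::{real_inner,complete_space} \<Rightarrow> ereal"
  assumes V: "subspace V" "closed V" and G: "Gamma0_on V h" and s: "0 < s" and r: "r \<in> V"
  shows "\<exists>p\<in>V. prox_on V s (conj_on V h) r = r - s *\<^sub>R p \<and> r - s *\<^sub>R p \<in> subdiff_on V h p"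
proof -
  define p where "p = prox_on V (1/s) h ((1/s) *\<^sub>R r)"
  define q where "q = r - s *\<^sub>R p"
  have "(1/s) *\<^sub>R r \<in> V" using V(1) r by (rule subspace_scale)
  then have p: "p \<in> V" and "(1 / (1/s)) *\<^sub>R ((1/s) *\<^sub>R r - p) \<in> subdiff_on V h p"
    using prox_on_subdiff[OF G V, of "1/s"] s unfolding p_def by auto
  moreover have "(1 / (1/s)) *\<^sub>R ((1/s) *\<^sub>R r - p) = q" unfolding q_def using s
    by (simp add: algebra_simps)
  ultimately have q: "q \<in> subdiff_on V h p" by simp
  then have qV: "q \<in> V" unfolding subdiff_on_def by auto
  obtain a where a: "h p = ereal a" using q unfolding subdiff_on_def by (cases "h p") auto
  have "prox_on V s (conj_on V h) r = q"
  proof (rule prox_on_eqI[where \<phi> = "conj_on V h", OF s qV conj_on_subdiff_eq[OF G p a q]])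
    fix z assume "z \<in> V"
    have "r - q = s *\<^sub>R p" unfolding q_def by simp
    then have "inner (r - q) (z - q) / s = inner p z - inner p q"
      using s by (simp add: inner_diff_right right_diff_distrib[symmetric])
    then show "ereal (inner p q - a + inner (r - q) (z - q) / s) \<le> conj_on V h z"
      using conj_on_ge[of p V h a z, OF p a] by simp
  qed
  then show ?thesis using p q unfolding q_def by blast
qed

section \<open>Hilbert space facts\<close>

lemma Gamma0_on_bounded_linear:
  assumes l: "bounded_linear l"
  shows "Gamma0_on UNIV (\<lambda>x. ereal (l x))"
  unfolding Gamma0_on_def proper_on_def lsc_on_def convex_ereal_on_def
proof (intro conjI ballI allI impI)
  interpret l: bounded_linear l by (rule l)
  fix x and s :: "nat \<Rightarrow> 'a" assume "s \<longlonglongrightarrow> x"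
  then have "liminf (\<lambda>k. ereal (l (s k))) = ereal (l x)"
    by (intro lim_imp_Liminf tendsto_ereal l.tendsto) auto
  then show "ereal (l x) \<le> liminf (\<lambda>k. ereal (l (s k)))" by simp
next
  interpret l: bounded_linear l by (rule l)
  fix x y :: 'a and t :: real
  show "ereal (l ((1 - t) *\<^sub>R x + t *\<^sub>R y)) \<le> ereal (1 - t) * ereal (l x) + ereal t * ereal (l y)"
    by (simp add: l.add l.scale)
qed auto

text \<open>The prox of the linear function \<open>- l\<close> at \<open>0\<close> represents \<open>l\<close>.\<close>
lemma Riesz_representation:
  fixes l :: "'a::{real_inner,complete_space} \<Rightarrow> real"
  assumes l: "bounded_linear l"
  shows "\<exists>a. \<forall>x. l x = inner a x"
proof -
  interpret l: bounded_linear l by (rule l)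
  define \<phi> where "\<phi> x = ereal (- l x)" for x
  have G: "Gamma0_on UNIV \<phi>"
    unfolding \<phi>_def by (rule Gamma0_on_bounded_linear[OF bounded_linear_minus[OF l]])
  define p where "p = prox_on UNIV 1 \<phi> (0::'a)"
  obtain a where pa: "\<phi> p = ereal a" and H: "\<forall>z. ereal (a + inner (0 - p) (z - p) / 1) \<le> \<phi> z"
    using prox_on_variational_ineq[OF G convex_UNIV closed_UNIV, of 1 0] unfolding p_def by auto
  have ineq: "l (z - p) \<le> inner p (z - p)" for z
    using H[rule_format, of z] pa unfolding \<phi>_def by (simp add: l.diff inner_diff_right)
  have "l d = inner p d" for d
    using ineq[of "p + d"] ineq[of "p - d"] by (simp add: l.diff l.add l.neg inner_diff_right)
  then show ?thesis by blast
qed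

lemma adjoint_inner_Hilbert:
  fixes B :: "'a::{real_inner,complete_space} \<Rightarrow> 'b::real_inner"
  assumes B: "bounded_linear B"
  shows "inner (B x) y = inner x (adjoint B y)"
proof -
  have "\<forall>y. \<exists>a. \<forall>x. inner (B x) y = inner a x"
  proof
    fix y
    have "bounded_linear (\<lambda>x. inner (B x) y)"
      by (rule bounded_linear_compose[OF bounded_linear_inner_left B])
    then show "\<exists>a. \<forall>x. inner (B x) y = inner a x" by (rule Riesz_representation)
  qed
  then obtain F where F: "\<And>y x. inner (B x) y = inner (F y) x" by metis
  have ex: "\<exists>f'. \<forall>x y. inner (B x) y = inner x (f' y)"
    by (rule exI[of _ F]) (metis F inner_commute)
  show ?thesis using someI_ex[OF ex] unfolding adjoint_def by blast
qed

lemma Gamma0_on_indicator_closed_subspace: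
  fixes M :: "'a::real_normed_vector set"
  assumes M: "subspace M" "closed M"
  shows "Gamma0_on UNIV (\<lambda>x. if x \<in> M then 0 else \<infinity>)"
  unfolding Gamma0_on_def proper_on_def lsc_on_def convex_ereal_on_def
proof (intro conjI ballI allI impI)
  show "\<exists>x\<in>UNIV. (if x \<in> M then 0 else \<infinity>) \<noteq> (\<infinity>::ereal)" using subspace_0[OF M(1)] by auto
next
  fix x and s :: "nat \<Rightarrow> 'a" assume lim: "s \<longlonglongrightarrow> x"
  show "(if x \<in> M then 0 else \<infinity>) \<le> liminf (\<lambda>k. if s k \<in> M then 0 else \<infinity> :: ereal)"
  proof (cases "x \<in> M")
    case True then show ?thesis by (intro Liminf_bounded) auto
  next
    case False
    have "eventually (\<lambda>k. s k \<in> - M) sequentially"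
      using lim False M(2) by (intro topological_tendstoD) auto
    then show ?thesis by (intro Liminf_bounded) (auto elim!: eventually_mono)
  qed
next
  fix x y :: 'a and t :: real assume t: "0 < t \<and> t < 1"
  have "x \<in> M \<Longrightarrow> y \<in> M \<Longrightarrow> (1 - t) *\<^sub>R x + t *\<^sub>R y \<in> M"
    using M(1) by (intro subspace_add subspace_scale) auto
  then show "(if (1 - t) *\<^sub>R x + t *\<^sub>R y \<in> M then 0 else \<infinity>)
      \<le> ereal (1 - t) * (if x \<in> M then 0 else \<infinity>) + ereal t * (if y \<in> M then 0 else \<infinity> :: ereal)"
    using t by auto
qed auto

text \<open>The projection is the prox of the indicator function of \<open>M\<close>.\<close>
lemma orthogonal_projection_exists:
  fixes M :: "'a::{real_inner,complete_space} set"
  assumes M: "subspace M" "closed M"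
  shows "\<exists>p\<in>M. \<forall>y\<in>M. inner (u - p) y = 0"
proof -
  define \<phi> :: "'a \<Rightarrow> ereal" where "\<phi> x = (if x \<in> M then 0 else \<infinity>)" for x
  have G: "Gamma0_on UNIV \<phi>"
    unfolding \<phi>_def by (rule Gamma0_on_indicator_closed_subspace[OF M])
  define p where "p = prox_on UNIV 1 \<phi> u"
  obtain a where pa: "\<phi> p = ereal a" and H: "\<forall>z. ereal (a + inner (u - p) (z - p) / 1) \<le> \<phi> z"
    using prox_on_variational_ineq[OF G convex_UNIV closed_UNIV, of 1 u] unfolding p_def by auto
  have pM: "p \<in> M" and a: "a = 0" using pa unfolding \<phi>_def by (auto split: if_splits)
  have ineq: "inner (u - p) (z - p) \<le> 0" if "z \<in> M" for z
    using H[rule_format, of z] that unfolding a \<phi>_def by simp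
  have "inner (u - p) y = 0" if y: "y \<in> M" for y
  proof -
    have "p + y \<in> M" "p - y \<in> M" using M(1) pM y by (auto intro: subspace_add subspace_diff)
    then show ?thesis using ineq[of "p + y"] ineq[of "p - y"] by (simp add: inner_diff_right)
  qed
  then show ?thesis using pM by blast
qed

lemma weakly_convergesD: "weakly_converges s l \<Longrightarrow> (\<lambda>k. inner (s k) v) \<longlonglongrightarrow> inner l v"
  unfolding weakly_converges_def by blast

lemma weakly_convergesD': "weakly_converges s l \<Longrightarrow> (\<lambda>k. inner v (s k)) \<longlonglongrightarrow> inner v l"
  using weakly_convergesD[of s l v] unfolding inner_commute[of v] .

lemma weakly_converges_closed_subspace:
  fixes V :: "'a::{real_inner,complete_space} set"
  assumes V: "subspace V" "closed V" and s: "\<And>k. s k \<in> V" and w: "weakly_converges s l"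
  shows "l \<in> V"
proof -
  obtain p where p: "p \<in> V" "\<And>y. y \<in> V \<Longrightarrow> inner (l - p) y = 0"
    using orthogonal_projection_exists[OF V, of l] by blast
  have "(\<lambda>k. inner (s k) (l - p)) \<longlonglongrightarrow> inner l (l - p)" by (rule weakly_convergesD[OF w])
  moreover have "(\<lambda>k. inner (s k) (l - p)) = (\<lambda>k. 0)" using p(2)[OF s] by (simp add: inner_commute)
  ultimately have "inner l (l - p) = 0" using LIMSEQ_const_iff by (metis)
  moreover have "inner p (l - p) = 0" using p by (simp add: inner_commute)
  ultimately have "inner (l - p) (l - p) = 0" by (simp add: inner_diff_left)
  then have "l = p" by simp
  then show ?thesis using p by simp
qed

lemma subspace_closure:
  fixes S :: "'a::real_normed_vector set"
  assumes S: "subspace S" shows "subspace (closure S)"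
  unfolding subspace_def
proof (intro conjI ballI allI)
  show "0 \<in> closure S" using subspace_0[OF S] closure_subset by blast
next
  fix x y assume "x \<in> closure S" "y \<in> closure S"
  then obtain a b where a: "\<And>n. a n \<in> S" "a \<longlonglongrightarrow> x" and b: "\<And>n. b n \<in> S" "b \<longlonglongrightarrow> y"
    unfolding closure_sequential by blast
  have "(\<lambda>n. a n + b n) \<longlonglongrightarrow> x + y" using a b by (intro tendsto_add) auto
  moreover have "\<And>n. a n + b n \<in> S" using a b S by (auto intro: subspace_add)
  ultimately show "x + y \<in> closure S" unfolding closure_sequential by (intro exI[of _ "\<lambda>n. a n + b n"]) auto
next
  fix c and x assume "x \<in> closure S"
  then obtain a where a: "\<And>n. a n \<in> S" "a \<longlonglongrightarrow> x" unfolding closure_sequential by blast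
  have "(\<lambda>n. c *\<^sub>R a n) \<longlonglongrightarrow> c *\<^sub>R x" using a by (intro tendsto_scaleR) auto
  moreover have "\<And>n. c *\<^sub>R a n \<in> S" using a S by (auto intro: subspace_scale)
  ultimately show "c *\<^sub>R x \<in> closure S" unfolding closure_sequential by (intro exI[of _ "\<lambda>n. c *\<^sub>R a n"]) auto
qed

lemma weakly_converges_subseq:
  "weakly_converges s l \<Longrightarrow> strict_mono r \<Longrightarrow> weakly_converges (\<lambda>k. s (r k)) l"
  unfolding weakly_converges_def using LIMSEQ_subseq_LIMSEQ by (fastforce simp: o_def)

lemma weakly_converges_diff_tendsto_zero:
  assumes "weakly_converges p l" "(\<lambda>n. q n - p n) \<longlonglongrightarrow> 0"
  shows "weakly_converges q l"
  unfolding weakly_converges_def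
proof
  fix z
  have "(\<lambda>n. inner (p n) z + inner (q n - p n) z) \<longlonglongrightarrow> inner l z + inner 0 z"
    by (intro tendsto_add weakly_convergesD assms tendsto_inner tendsto_const)
  then show "(\<lambda>n. inner (q n) z) \<longlonglongrightarrow> inner l z" by (simp add: inner_diff_left)
qed

lemma tendsto_inner_bounded_zero:
  fixes p q :: "nat \<Rightarrow> 'a::real_inner"
  assumes "\<And>k. norm (p k) \<le> K" "q \<longlonglongrightarrow> 0"
  shows "(\<lambda>k. inner (p k) (q k)) \<longlonglongrightarrow> 0"
proof (rule Lim_null_comparison)
  show "\<forall>\<^sub>F k in sequentially. norm (inner (p k) (q k)) \<le> K * norm (q k)"
  proof (intro always_eventually allI)
    fix k
    have "norm (inner (p k) (q k)) \<le> norm (p k) * norm (q k)" using Cauchy_Schwarz_ineq2 by simp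
    also have "\<dots> \<le> K * norm (q k)" using assms(1) by (intro mult_right_mono) auto
    finally show "norm (inner (p k) (q k)) \<le> K * norm (q k)" .
  qed
  show "(\<lambda>k. K * norm (q k)) \<longlonglongrightarrow> 0"
    using tendsto_mult_right_zero assms(2) tendsto_norm_zero by blast
qed

lemma mult_sum_le_imp_le:
  fixes \<epsilon> a :: real and m :: nat
  assumes "0 < \<epsilon>" "\<epsilon> * (a + (\<Sum>i<m. c i)) \<le> E" "0 \<le> a" "\<And>i. 0 \<le> c i"
  shows "a \<le> E / \<epsilon>" and "i < m \<Longrightarrow> c i \<le> E / \<epsilon>"
proof -
  have "a + (\<Sum>i<m. c i) \<le> E / \<epsilon>" using assms(1,2) by (simp add: field_simps)
  moreover have "0 \<le> (\<Sum>i<m. c i)" using assms(4) by (simp add: sum_nonneg)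
  moreover have "i < m \<Longrightarrow> c i \<le> (\<Sum>i<m. c i)" using assms(4) by (intro member_le_sum) auto
  ultimately show "a \<le> E / \<epsilon>" and "i < m \<Longrightarrow> c i \<le> E / \<epsilon>" using assms(3) by linarith+
qed

lemma tendsto_zero_if_norm_power2_le:
  fixes f :: "nat \<Rightarrow> 'a::real_normed_vector"
  assumes "\<And>k. norm (f k)^2 \<le> c k" "c \<longlonglongrightarrow> 0"
  shows "f \<longlonglongrightarrow> 0"
proof (rule Lim_null_comparison)
  show "\<forall>\<^sub>F k in sequentially. norm (f k) \<le> sqrt (c k)"
    using assms(1) by (intro always_eventually allI) (simp add: real_le_rsqrt)
  show "(\<lambda>k. sqrt (c k)) \<longlonglongrightarrow> 0" using tendsto_real_sqrt[OF assms(2)] by simp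
qed

lemma LIMSEQ_if_all_subseqs:
  fixes X :: "nat \<Rightarrow> 'a::metric_space"
  assumes "\<And>q :: nat \<Rightarrow> nat. strict_mono q \<Longrightarrow> \<exists>r. strict_mono r \<and> (\<lambda>n. X (q (r n))) \<longlonglongrightarrow> L"
  shows "X \<longlonglongrightarrow> L"
proof (rule ccontr)
  assume "\<not> X \<longlonglongrightarrow> L"
  then obtain \<epsilon> where e: "\<epsilon> > 0" and inf: "\<forall>N. \<exists>n\<ge>N. \<not> dist (X n) L < \<epsilon>"
    unfolding lim_sequentially by blast
  define S where "S = {n. \<epsilon> \<le> dist (X n) L}"
  have "infinite S"
    unfolding infinite_nat_iff_unbounded_le S_def using inf by (simp add: not_less)
  then obtain q :: "nat \<Rightarrow> nat" where q: "strict_mono q" "\<And>n. q n \<in> S"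
    using infinite_enumerate by blast
  obtain r where "(\<lambda>n. X (q (r n))) \<longlonglongrightarrow> L" using assms q(1) by blast
  then obtain N where "dist (X (q (r N))) L < \<epsilon>" using e unfolding lim_sequentially by blast
  moreover have "\<epsilon> \<le> dist (X (q (r N))) L" using q(2) unfolding S_def by simp
  ultimately show False by simp
qed

lemma weakly_converges_if_all_subseqs:
  assumes "\<And>q :: nat \<Rightarrow> nat. strict_mono q \<Longrightarrow>
    \<exists>r. strict_mono r \<and> weakly_converges (\<lambda>n. s (q (r n))) l"
  shows "weakly_converges s l"
  unfolding weakly_converges_def
  by (intro allI LIMSEQ_if_all_subseqs) (use assms weakly_convergesD in blast)

lemma inner_convergent_span:
  assumes "\<And>y. y \<in> A \<Longrightarrow> convergent (\<lambda>k. inner (s k) y)" and "y \<in> span A"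
  shows "convergent (\<lambda>k. inner (s k) y)"
proof (rule span_induct[OF assms(2)])
  show "subspace {y. convergent (\<lambda>k. inner (s k) y)}"
    unfolding subspace_def
    by (auto simp: inner_add_right intro: convergent_add convergent_mult convergent_const)
qed (use assms(1) in auto)

lemma inner_convergent_closure:
  fixes s :: "nat \<Rightarrow> 'a::real_inner"
  assumes bnd: "\<And>k. norm (s k) \<le> C"
    and conv: "\<And>y. y \<in> A \<Longrightarrow> convergent (\<lambda>k. inner (s k) y)" and y: "y \<in> closure A"
  shows "convergent (\<lambda>k. inner (s k) y)"
proof -
  have C0: "0 \<le> C" using bnd[of 0] norm_ge_zero order_trans by blast
  have "Cauchy (\<lambda>k. inner (s k) y)"
  proof (rule metric_CauchyI)
    fix e :: real assume e: "e > 0"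
    then obtain y' where y': "y' \<in> A" "dist y' y < e / (3 * (C + 1))"
      using y C0 unfolding closure_approachable by (metis divide_pos_pos add_nonneg_pos
          mult_pos_pos zero_less_numeral zero_less_one)
    have close: "\<bar>inner (s k) y - inner (s k) y'\<bar> < e/3" for k
    proof -
      have "\<bar>inner (s k) y - inner (s k) y'\<bar> = \<bar>inner (s k) (y - y')\<bar>"
        by (simp add: inner_diff_right)
      also have "\<dots> \<le> C * norm (y - y')"
        using Cauchy_Schwarz_ineq2[of "s k" "y - y'"] bnd[of k]
        by (meson mult_right_mono norm_ge_zero order_trans)
      also have "\<dots> \<le> C * (e / (3 * (C + 1)))"
        using y'(2) C0 by (intro mult_left_mono) (auto simp: dist_norm norm_minus_commute)
      also have "\<dots> < e / 3" using e C0 by (simp add: field_simps)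
      finally show ?thesis .
    qed
    have "Cauchy (\<lambda>k. inner (s k) y')" using conv[OF y'(1)] Cauchy_convergent_iff by blast
    then obtain N where N: "\<And>m n. m \<ge> N \<Longrightarrow> n \<ge> N \<Longrightarrow> dist (inner (s m) y') (inner (s n) y') < e/3"
      using e by (meson metric_CauchyD zero_less_divide_iff zero_less_numeral)
    have "dist (inner (s m) y) (inner (s n) y) < e" if "m \<ge> N" "n \<ge> N" for m n
      using N[OF that] close[of m] close[of n] unfolding dist_real_def by argo
    then show "\<exists>N. \<forall>m\<ge>N. \<forall>n\<ge>N. dist (inner (s m) y) (inner (s n) y) < e" by blast
  qed
  then show ?thesis using Cauchy_convergent_iff by blast
qed

lemma bounded_imp_inner_convergent_subseq:
  fixes s :: "nat \<Rightarrow> 'a::real_inner"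
  assumes bnd: "\<And>k. norm (s k) \<le> C"
  shows "\<exists>r. strict_mono r \<and> (\<forall>j. convergent (\<lambda>k. inner (s (r k)) (s j)))"
proof -
  define P where "P j r \<longleftrightarrow> convergent (\<lambda>k. inner (s (r k)) (s j))" for j and r :: "nat \<Rightarrow> nat"
  interpret subseqs P
  proof
    fix n and \<sigma> :: "nat \<Rightarrow> nat" assume "strict_mono \<sigma>"
    have "\<bar>inner (s k) (s n)\<bar> \<le> C * norm (s n)" for k
      using Cauchy_Schwarz_ineq2[of "s k" "s n"] bnd[of k]
      by (meson mult_right_mono norm_ge_zero order_trans)
    then have "bounded (range (\<lambda>k. inner (s (\<sigma> k)) (s n)))"
      unfolding bounded_iff by (intro exI[of _ "C * norm (s n)"]) auto
    then obtain l r where "strict_mono r" "((\<lambda>k. inner (s (\<sigma> k)) (s n)) \<circ> r) \<longlonglongrightarrow> l"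
      using bounded_imp_convergent_subsequence by blast
    then show "\<exists>r'. strict_mono r' \<and> P n (\<sigma> \<circ> r')"
      unfolding P_def convergent_def by (auto simp: o_def)
  qed
  have "convergent (\<lambda>k. inner (s (diagseq k)) (s j))" for j
  proof -
    have "P j (diagseq \<circ> (+) (Suc j))"
    proof (rule diagseq_holds)
      fix r' s' :: "nat \<Rightarrow> nat" and n assume "strict_mono r'" "P n s'"
      then show "P n (s' \<circ> r')" unfolding P_def using convergent_subseq_convergent
        by (fastforce simp: o_def)
    qed
    then have "convergent (\<lambda>k. inner (s (diagseq (k + Suc j))) (s j))"
      unfolding P_def by (simp add: o_def add.commute)
    then show ?thesis by (subst (asm) convergent_ignore_initial_segment)
  qed
  then show ?thesis using subseq_diagseq by blast
qed

text \<open>The pointwise limit of the functionals \<open>inner (s k)\<close> is bounded linear, and its Riesz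
  representative is the weak limit.\<close>
lemma weakly_convergent_if_inner_convergent:
  fixes s :: "nat \<Rightarrow> 'a::{real_inner,complete_space}"
  assumes bnd: "\<And>k. norm (s k) \<le> C" and conv: "\<And>y. convergent (\<lambda>k. inner (s k) y)"
  shows "\<exists>l. weakly_converges s l"
proof -
  define F where "F y = lim (\<lambda>k. inner (s k) y)" for y
  have F: "(\<lambda>k. inner (s k) y) \<longlonglongrightarrow> F y" for y
    using conv[of y] unfolding F_def convergent_LIMSEQ_iff .
  have "bounded_linear F"
  proof (rule bounded_linear_intro[where K = C])
    fix x y
    have "(\<lambda>k. inner (s k) (x + y)) \<longlonglongrightarrow> F x + F y"
      unfolding inner_add_right by (intro tendsto_add F)
    then show "F (x + y) = F x + F y" using F LIMSEQ_unique by blast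
  next
    fix c x
    have "(\<lambda>k. inner (s k) (c *\<^sub>R x)) \<longlonglongrightarrow> c *\<^sub>R F x"
      unfolding inner_scaleR_right real_scaleR_def by (intro tendsto_mult tendsto_const F)
    then show "F (c *\<^sub>R x) = c *\<^sub>R F x" using F LIMSEQ_unique by blast
  next
    fix x
    have "\<bar>inner (s k) x\<bar> \<le> C * norm x" for k
      using Cauchy_Schwarz_ineq2[of "s k" x] bnd[of k]
      by (meson mult_right_mono norm_ge_zero order_trans)
    then have "\<bar>F x\<bar> \<le> C * norm x" by (intro Lim_bounded[OF tendsto_rabs[OF F], where M = 0]) auto
    then show "norm (F x) \<le> norm x * C" by (simp add: mult.commute)
  qed
  then obtain l where "\<And>y. F y = inner l y" using Riesz_representation by blast
  then have "weakly_converges s l" unfolding weakly_converges_def using F by simp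
  then show ?thesis ..
qed

text \<open>Along the diagonal subsequence the inner products converge on the closed span \<open>M\<close> of the
  sequence, hence everywhere since \<open>inner (s k) y = inner (s k) (P y)\<close> for the projection
  \<open>P\<close> onto \<open>M\<close>.\<close>
lemma bounded_imp_weakly_convergent_subseq:
  fixes s :: "nat \<Rightarrow> 'a::{real_inner,complete_space}"
  assumes bnd: "\<And>k. norm (s k) \<le> C"
  shows "\<exists>r l. strict_mono r \<and> weakly_converges (\<lambda>k. s (r k)) l"
proof -
  obtain r where r: "strict_mono r" "\<And>j. convergent (\<lambda>k. inner (s (r k)) (s j))"
    using bounded_imp_inner_convergent_subseq[of s C] bnd by blast
  define M where "M = closure (span (range s))"
  have convM: "convergent (\<lambda>k. inner (s (r k)) y)" if "y \<in> M" for y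
    using inner_convergent_closure[of "\<lambda>k. s (r k)" C "span (range s)" y]
      inner_convergent_span[of "range s" "\<lambda>k. s (r k)"] r(2) bnd that
    unfolding M_def by blast
  obtain P where P: "\<And>u. P u \<in> M" "\<And>u z. z \<in> M \<Longrightarrow> inner (u - P u) z = 0"
    using orthogonal_projection_exists[of M] unfolding M_def
    by (metis closed_closure subspace_closure subspace_span)
  have "s k \<in> M" for k unfolding M_def by (intro subsetD[OF closure_subset] span_base rangeI)
  then have "inner (s (r k)) (y - P y) = 0" for k y by (metis P(2) inner_commute)
  then have "inner (s (r k)) y = inner (s (r k)) (P y)" for k y
    by (simp add: inner_diff_right)
  then have "convergent (\<lambda>k. inner (s (r k)) y)" for y using convM[OF P(1)] by simp
  then obtain l where "weakly_converges (\<lambda>k. s (r k)) l"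
    using weakly_convergent_if_inner_convergent[of "\<lambda>k. s (r k)"] bnd by blast
  then show ?thesis using r(1) by blast
qed

lemma bounded_imp_weakly_convergent_subseq_family:
  fixes F :: "nat \<Rightarrow> nat \<Rightarrow> 'a::{real_inner,complete_space}"
  assumes "\<And>k i. i < n \<Longrightarrow> norm (F k i) \<le> C"
  shows "\<exists>r l. strict_mono r \<and> (\<forall>i<n. weakly_converges (\<lambda>k. F (r k) i) (l i))"
  using assms
proof (induction n)
  case 0
  then show ?case using strict_mono_id by blast
next
  case (Suc n)
  then obtain r l where r: "strict_mono r" "\<forall>i<n. weakly_converges (\<lambda>k. F (r k) i) (l i)" by force
  obtain r2 l2 where r2: "strict_mono r2" "weakly_converges (\<lambda>k. F (r (r2 k)) n) l2"
    using bounded_imp_weakly_convergent_subseq[of "\<lambda>k. F (r k) n" C] Suc.prems by auto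
  have "strict_mono (r \<circ> r2)" using r(1) r2(1) by (rule strict_mono_o)
  moreover have "\<forall>i<Suc n. weakly_converges (\<lambda>k. F ((r \<circ> r2) k) i) ((l(n := l2)) i)"
    using r(2) r2 weakly_converges_subseq by (auto simp: less_Suc_eq)
  ultimately show ?case by blast
qed

section \<open>Smooth convex functions\<close>

lemma has_real_derivative_along_line:
  fixes f :: "'a::real_inner \<Rightarrow> real"
  assumes grad: "\<And>z. (f has_derivative (\<lambda>d. inner (Df z) d)) (at z)"
  shows "((\<lambda>\<theta>. f (x + \<theta> *\<^sub>R d)) has_real_derivative inner (Df (x + \<theta> *\<^sub>R d)) d) (at \<theta>)"
proof -
  have "((\<lambda>\<theta>. x + \<theta> *\<^sub>R d) has_derivative (\<lambda>h. h *\<^sub>R d)) (at \<theta>)"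
    by (auto intro!: derivative_eq_intros)
  then have "((\<lambda>\<theta>. f (x + \<theta> *\<^sub>R d)) has_derivative (\<lambda>h. inner (Df (x + \<theta> *\<^sub>R d)) (h *\<^sub>R d))) (at \<theta>)"
    by (rule has_derivative_compose[OF _ grad])
  moreover have "(\<lambda>h. inner (Df (x + \<theta> *\<^sub>R d)) (h *\<^sub>R d)) = (*) (inner (Df (x + \<theta> *\<^sub>R d)) d)"
    by (simp add: fun_eq_iff mult.commute)
  ultimately show ?thesis unfolding has_field_derivative_def by simp
qed

lemma convex_gradient_ineq:
  fixes f :: "'a::real_inner \<Rightarrow> real"
  assumes conv: "convex_on UNIV f" and grad: "\<And>z. (f has_derivative (\<lambda>d. inner (Df z) d)) (at z)"
  shows "f x + inner (Df x) (z - x) \<le> f z"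
proof -
  define d where "d = z - x"
  define \<phi> where "\<phi> t = f (x + t *\<^sub>R d)" for t
  have D: "(\<phi> has_real_derivative inner (Df x) d) (at 0)"
    using has_real_derivative_along_line[OF grad, where x=x and \<theta>=0 and d=d] unfolding \<phi>_def by simp
  have lim: "((\<lambda>h. (\<phi> (0 + h) - \<phi> 0) / h) \<longlongrightarrow> inner (Df x) d) (at_right 0)"
    using DERIV_D[OF D] by (rule tendsto_within_subset) auto
  have ev: "eventually (\<lambda>h. (\<phi> (0 + h) - \<phi> 0) / h \<le> f z - f x) (at_right 0)"
    using eventually_at_right_real[of 0 1, OF zero_less_one]
  proof eventually_elim
    case (elim t)
    then have t: "0 < t" "t < 1" by auto
    have e: "x + t *\<^sub>R d = (1 - t) *\<^sub>R x + t *\<^sub>R z" unfolding d_def by (simp add: algebra_simps)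
    have "\<phi> t \<le> (1 - t) * f x + t * f z" unfolding \<phi>_def e
      using t by (intro convex_onD[OF conv]) auto
    then have "\<phi> t - \<phi> 0 \<le> t * (f z - f x)" unfolding \<phi>_def by (simp add: algebra_simps)
    then show ?case using t by (simp add: pos_divide_le_eq mult.commute)
  qed
  have "inner (Df x) d \<le> f z - f x"
    by (rule tendsto_le[OF trivial_limit_at_right_real tendsto_const lim ev])
  then show ?thesis unfolding d_def by simp
qed

lemma descent_lemma:
  fixes f :: "'a::real_inner \<Rightarrow> real"
  assumes grad: "\<And>z. (f has_derivative (\<lambda>d. inner (Df z) d)) (at z)"
    and lip: "\<And>u v. norm (Df u - Df v) \<le> L * norm (u - v)" and L: "0 \<le> L"
  shows "f z \<le> f x + inner (Df x) (z - x) + L / 2 * norm (z - x)^2"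
proof -
  define d where "d = z - x"
  define N where "N = norm d ^ 2"
  define c where "c = inner (Df x) d"
  define \<psi> where "\<psi> t = f (x + t *\<^sub>R d) - t * c - L / 2 * t^2 * N" for t
  have "\<psi> 1 \<le> \<psi> 0"
  proof (rule DERIV_nonpos_imp_nonincreasing[of 0 1 \<psi>])
    fix t :: real assume t: "0 \<le> t" "t \<le> 1"
    have der: "(\<psi> has_real_derivative (inner (Df (x + t *\<^sub>R d)) d - c - L / 2 * (2 * t) * N)) (at t)"
      unfolding \<psi>_def
      by (intro DERIV_diff has_real_derivative_along_line[OF grad] DERIV_cmult DERIV_cmult_right)
         (auto intro!: derivative_eq_intros)
    have "inner (Df (x + t *\<^sub>R d)) d - c = inner (Df (x + t *\<^sub>R d) - Df x) d"
      unfolding c_def by (simp add: inner_diff_left)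
    also have "\<dots> \<le> norm (Df (x + t *\<^sub>R d) - Df x) * norm d" by (rule norm_cauchy_schwarz)
    also have "\<dots> \<le> L * norm (t *\<^sub>R d) * norm d"
      using lip[of "x + t *\<^sub>R d" x] by (intro mult_right_mono) auto
    also have "\<dots> = L * t * N" unfolding N_def using t by (simp add: power2_eq_square)
    finally have "inner (Df (x + t *\<^sub>R d)) d - c - L / 2 * (2 * t) * N \<le> 0" by simp
    then show "\<exists>y. (\<psi> has_real_derivative y) (at t) \<and> y \<le> 0" using der by blast
  qed simp
  then show ?thesis unfolding \<psi>_def d_def N_def c_def by simp
qed

text \<open>Baillon-Haddad: compare the gradient inequality at \<open>a\<close> with the descent lemma at \<open>b\<close>, both
  evaluated at \<open>b - (Df b - Df a) / L\<close>.\<close>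
lemma gradient_cocoercive:
  fixes f :: "'a::real_inner \<Rightarrow> real"
  assumes conv: "convex_on UNIV f" and grad: "\<And>z. (f has_derivative (\<lambda>d. inner (Df z) d)) (at z)"
    and lip: "\<And>u v. norm (Df u - Df v) \<le> L * norm (u - v)" and L: "0 < L"
  shows "norm (Df x - Df y)^2 / L \<le> inner (Df x - Df y) (x - y)"
proof -
  have half: "norm (Df b - Df a)^2 / (2 * L) \<le> f b - f a - inner (Df a) (b - a)" for a b
  proof -
    define G where "G = Df b - Df a"
    define z where "z = b - (1 / L) *\<^sub>R G"
    have "f a + inner (Df a) (z - a) \<le> f z" by (rule convex_gradient_ineq[OF conv grad])
    moreover have "f z \<le> f b + inner (Df b) (z - b) + L / 2 * norm (z - b)^2"
      by (rule descent_lemma[OF grad lip]) (use L in auto)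
    moreover have "inner (Df a) (z - a) = inner (Df a) (b - a) - inner (Df a) G / L"
      unfolding z_def by (simp add: inner_diff_right algebra_simps)
    moreover have "inner (Df b) (z - b) = - inner (Df b) G / L" unfolding z_def by simp
    moreover have "L / 2 * norm (z - b)^2 = norm G^2 / (2 * L)"
      unfolding z_def using L by (simp add: power2_eq_square field_simps)
    moreover have "inner (Df b) G / L - inner (Df a) G / L = norm G^2 / L"
      unfolding G_def
      by (simp add: diff_divide_distrib[symmetric] inner_diff_left[symmetric] power2_norm_eq_inner)
    moreover have "norm G^2 / L - norm G^2 / (2 * L) = norm G^2 / (2 * L)"
      using L by (simp add: field_simps)
    ultimately show ?thesis unfolding G_def by argo
  qed
  have "(f x - f y - inner (Df y) (x - y)) + (f y - f x - inner (Df x) (y - x))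
      = inner (Df x - Df y) (x - y)"
    by (simp add: inner_diff_left inner_diff_right algebra_simps)
  moreover have "norm (Df x - Df y)^2 / (2 * L) + norm (Df x - Df y)^2 / (2 * L)
      = norm (Df x - Df y)^2 / L"
    using L by (simp add: field_simps)
  ultimately show ?thesis using half[of x y] half[of y x] by (simp add: norm_minus_commute)
qed

lemma cocoercive_shift_bound:
  fixes G X d :: "'a::real_inner"
  assumes L: "0 < L" and G: "norm G^2 / L \<le> inner G X"
  shows "- inner G (X + d) \<le> L / 4 * norm d^2"
proof -
  have "- inner G d \<le> norm G * norm d" using norm_cauchy_schwarz[of G "- d"] by simp
  moreover have "(norm G - L / 2 * norm d)^2 / L = norm G^2 / L - norm G * norm d + L / 4 * norm d^2"
    using L by (simp add: power2_eq_square field_simps)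
  moreover have "0 \<le> (norm G - L / 2 * norm d)^2 / L" using L by simp
  ultimately show ?thesis using G by (simp add: inner_add_right)
qed

section \<open>A coercive quadratic form\<close>

lemma inner_coupling_lower_bound:
  assumes B: "bounded_linear B" and s: "0 < s" and \<theta>: "0 < \<theta>"
  shows "(1 - \<theta>) * norm e^2 / s - s * (onorm B)^2 * norm d^2 / \<theta>
    \<le> norm e^2 / s - 2 * inner e (B d)"
proof -
  define a c where "a = norm e" and "c = onorm B * norm d"
  have "inner e (B d) \<le> norm e * norm (B d)" by (rule norm_cauchy_schwarz)
  also have "\<dots> \<le> a * c" unfolding a_def c_def by (intro mult_left_mono onorm[OF B]) simp
  finally have "inner e (B d) \<le> a * c" .
  moreover have "\<theta> * a^2 / s + s * c^2 / \<theta> - 2 * a * c = (\<theta> * a - s * c)^2 / (\<theta> * s)"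
    using s \<theta> by (simp add: field_simps power2_eq_square)
  moreover have "0 \<le> (\<theta> * a - s * c)^2 / (\<theta> * s)" using s \<theta> by simp
  moreover have "(1 - \<theta>) * a^2 / s = a^2 / s - \<theta> * a^2 / s" by (simp add: algebra_simps diff_divide_distrib)
  moreover have "s * c^2 / \<theta> = s * (onorm B)^2 * norm d^2 / \<theta>"
    unfolding c_def by (simp add: power_mult_distrib)
  ultimately show ?thesis unfolding a_def by argo
qed

text \<open>Each coupling term is absorbed by Young's inequality with weight \<open>\<theta> = (N + c) / (2 c)\<close>,
  which lies strictly between \<open>N / c\<close> and \<open>1\<close>.\<close>
lemma coupled_quadratic_form_coercive:
  fixes B :: "nat \<Rightarrow> 'a::real_normed_vector \<Rightarrow> 'b::real_inner"
  assumes B: "\<And>i. i < m \<Longrightarrow> bounded_linear (B i)" and s: "\<And>i. i < m \<Longrightarrow> 0 < s i"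
    and c: "(\<Sum>i<m. s i * (onorm (B i))^2) < c"
  shows "\<exists>\<epsilon>>0. \<forall>d e. \<epsilon> * (norm d^2 + (\<Sum>i<m. norm (e i)^2))
      \<le> c * norm d^2 + (\<Sum>i<m. norm (e i)^2 / s i - 2 * inner (e i) (B i d))"
proof -
  define N where "N = (\<Sum>i<m. s i * (onorm (B i))^2)"
  have N0: "0 \<le> N" unfolding N_def using s by (intro sum_nonneg mult_nonneg_nonneg) (auto intro: less_imp_le)
  have c0: "0 < c" using c N0 unfolding N_def by linarith
  define \<theta> where "\<theta> = (N + c) / (2 * c)"
  have \<theta>: "0 < \<theta>" "\<theta> < 1" unfolding \<theta>_def using c0 N0 c N_def by (auto simp: field_simps)
  define S where "S = (\<Sum>i<m. s i) + 1"
  have sS: "s i \<le> S" if "i < m" for i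
    using member_le_sum[of i "{..<m}" s] s that unfolding S_def by (simp add: less_imp_le)
  have "0 \<le> (\<Sum>i<m. s i)" using s by (intro sum_nonneg) (auto intro: less_imp_le)
  then have S0: "0 < S" unfolding S_def by simp
  define \<epsilon>1 where "\<epsilon>1 = c - N / \<theta>"
  have "N / \<theta> = 2 * c * N / (N + c)" unfolding \<theta>_def using c0 N0 by (simp add: field_simps)
  also have "\<dots> < c" using c0 N0 c unfolding N_def by (simp add: pos_divide_less_eq algebra_simps)
  finally have e1: "0 < \<epsilon>1" unfolding \<epsilon>1_def by simp
  define \<epsilon>2 where "\<epsilon>2 = (1 - \<theta>) / S"
  have e2: "0 < \<epsilon>2" unfolding \<epsilon>2_def using \<theta> S0 by simp
  have "min \<epsilon>1 \<epsilon>2 * (norm d^2 + (\<Sum>i<m. norm (e i)^2))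
      \<le> c * norm d^2 + (\<Sum>i<m. norm (e i)^2 / s i - 2 * inner (e i) (B i d))" for d e
  proof -
    have "\<epsilon>2 * norm (e i)^2 - s i * (onorm (B i))^2 * norm d^2 / \<theta>
        \<le> norm (e i)^2 / s i - 2 * inner (e i) (B i d)" if i: "i < m" for i
    proof -
      have "(1 - \<theta>) / S \<le> (1 - \<theta>) / s i" using \<theta> s[OF i] sS[OF i] by (intro divide_left_mono) auto
      from mult_right_mono[OF this zero_le_power2]
      have "\<epsilon>2 * norm (e i)^2 \<le> (1 - \<theta>) * norm (e i)^2 / s i" unfolding \<epsilon>2_def by simp
      then show ?thesis using inner_coupling_lower_bound[OF B[OF i] s[OF i] \<theta>(1), of "e i" d] by argo
    qed
    then have "(\<Sum>i<m. \<epsilon>2 * norm (e i)^2 - s i * (onorm (B i))^2 * norm d^2 / \<theta>)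
        \<le> (\<Sum>i<m. norm (e i)^2 / s i - 2 * inner (e i) (B i d))"
      by (intro sum_mono) auto
    moreover have "(\<Sum>i<m. \<epsilon>2 * norm (e i)^2 - s i * (onorm (B i))^2 * norm d^2 / \<theta>)
        = \<epsilon>2 * (\<Sum>i<m. norm (e i)^2) - N * norm d^2 / \<theta>"
      unfolding N_def by (simp add: sum_subtractf sum_distrib_left sum_divide_distrib sum_distrib_right)
    moreover have "min \<epsilon>1 \<epsilon>2 * norm d^2 \<le> \<epsilon>1 * norm d^2" by (intro mult_right_mono) auto
    moreover have "min \<epsilon>1 \<epsilon>2 * (\<Sum>i<m. norm (e i)^2) \<le> \<epsilon>2 * (\<Sum>i<m. norm (e i)^2)"
      by (intro mult_right_mono sum_nonneg) auto
    moreover have "\<epsilon>1 * norm d^2 = c * norm d^2 - N * norm d^2 / \<theta>"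
      unfolding \<epsilon>1_def by (simp add: algebra_simps)
    ultimately show ?thesis by (simp add: distrib_left)
  qed
  moreover have "0 < min \<epsilon>1 \<epsilon>2" using e1 e2 by simp
  ultimately show ?thesis by blast
qed

section \<open>The primal-dual iteration\<close>

locale primal_dual_iteration =
  fixes f :: "'a::{real_inner,complete_space} \<Rightarrow> real"
    and Df :: "'a \<Rightarrow> 'a"
    and g :: "'a \<Rightarrow> ereal"
    and m :: nat
    and V :: "nat \<Rightarrow> 'b::{real_inner,complete_space} set"
    and h :: "nat \<Rightarrow> 'b \<Rightarrow> ereal"
    and B :: "nat \<Rightarrow> 'a \<Rightarrow> 'b"
    and L \<gamma> \<sigma> \<tau> :: real
    and w :: "nat \<Rightarrow> real"
    and x :: "nat \<Rightarrow> 'a"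
    and y :: "nat \<Rightarrow> nat \<Rightarrow> 'b"
  assumes f_conv: "convex_on UNIV f"
    and f_grad: "\<And>z. (f has_derivative (\<lambda>d. inner (Df z) d)) (at z)"
    and L_pos: "0 < L"
    and Df_lip: "\<And>u v. norm (Df u - Df v) \<le> L * norm (u - v)"
    and g_G0: "Gamma0_on UNIV g"
    and V_sub: "\<And>i. i < m \<Longrightarrow> subspace (V i) \<and> closed (V i)"
    and h_G0: "\<And>i. i < m \<Longrightarrow> Gamma0_on (V i) (h i)"
    and B_lin: "\<And>i. i < m \<Longrightarrow> bounded_linear (B i)"
    and B_range: "\<And>i z. i < m \<Longrightarrow> B i z \<in> V i"
    and sol_exists: "\<exists>xh v u. v \<in> subdiff_on UNIV g xh
        \<and> (\<forall>i<m. u i \<in> subdiff_on (V i) (h i) (B i xh))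
        \<and> Df xh + v + (\<Sum>i<m. adjoint (B i) (u i)) = 0"
    and w_range: "\<And>i. i < m \<Longrightarrow> 0 < w i \<and> w i < 1"
    and w_sum: "(\<Sum>i<m. w i) = 1"
    and gamma_range: "0 < \<gamma>" "\<gamma> < 2 / L"
    and sigma_pos: "0 < \<sigma>" and tau_pos: "0 < \<tau>"
    and step_cond: "\<sigma> * \<tau> * (\<Sum>i<m. w i * (onorm (B i))^2) < 1"
    and y0: "\<And>i. i < m \<Longrightarrow> y 0 i \<in> V i"
    and x_iter: "\<And>k. x (Suc k) = prox_on UNIV (\<tau> * \<gamma> / (1 + \<tau>)) g
        ((1 / (1 + \<tau>)) *\<^sub>R (x k - \<tau> *\<^sub>R (\<Sum>i<m. w i *\<^sub>R adjoint (B i) (y k i))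
            + \<tau> *\<^sub>R (x k - \<gamma> *\<^sub>R Df (x k))))"
    and y_iter: "\<And>k i. i < m \<Longrightarrow> y (Suc k) i = (\<gamma> / w i) *\<^sub>R
        prox_on (V i) (w i * \<sigma> / \<gamma>) (conj_on (V i) (h i))
          ((w i / \<gamma>) *\<^sub>R (y k i + \<sigma> *\<^sub>R B i (2 *\<^sub>R x (Suc k) - x k)))"
begin

definition "t = \<tau> * \<gamma> / (1 + \<tau>)"
definition "s i = w i * \<sigma> / \<gamma>"
definition "v k i = (w i / \<gamma>) *\<^sub>R y k i"

lemma t_pos: "0 < t"
  unfolding t_def using tau_pos gamma_range by simp

lemma s_pos: "i < m \<Longrightarrow> 0 < s i"
  unfolding s_def using w_range sigma_pos gamma_range by simp

lemma V_subspace: "i < m \<Longrightarrow> subspace (V i)"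
  and V_closed: "i < m \<Longrightarrow> closed (V i)"
  using V_sub by blast+

lemma B_adjoint: "i < m \<Longrightarrow> inner (B i a) b = inner a (adjoint (B i) b)"
  by (rule adjoint_inner_Hilbert[OF B_lin])

lemma B_diff: "i < m \<Longrightarrow> B i (a - b) = B i a - B i b"
  and B_add: "i < m \<Longrightarrow> B i (a + b) = B i a + B i b"
  using B_lin bounded_linear.linear linear_diff linear_add by blast+

lemma adjoint_B_scaleR:
  assumes i: "i < m" shows "adjoint (B i) (c *\<^sub>R b) = c *\<^sub>R adjoint (B i) b"
proof -
  have "inner z (adjoint (B i) (c *\<^sub>R b)) = inner z (c *\<^sub>R adjoint (B i) b)" for z
    using B_adjoint[OF i, of z "c *\<^sub>R b"] B_adjoint[OF i, of z b] by simp
  then show ?thesis using vector_eq_ldot by blast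
qed

lemma inner_sum_adjoint_B:
  "inner (\<Sum>i<m. adjoint (B i) (b i)) z = (\<Sum>i<m. inner (b i) (B i z))"
  unfolding inner_sum_left
proof (intro sum.cong refl)
  fix i assume "i \<in> {..<m}"
  then have "inner (B i z) (b i) = inner z (adjoint (B i) (b i))" by (simp add: B_adjoint)
  then show "inner (adjoint (B i) (b i)) z = inner (b i) (B i z)" by (metis inner_commute)
qed

lemma x_Suc_prox:
  "x (Suc k) = prox_on UNIV t g (x k - t *\<^sub>R (Df (x k) + (\<Sum>i<m. adjoint (B i) (v k i))))"
proof -
  have "(\<Sum>i<m. w i *\<^sub>R adjoint (B i) (y k i)) = \<gamma> *\<^sub>R (\<Sum>i<m. adjoint (B i) (v k i))"
    unfolding scaleR_sum_right v_def using gamma_range by (intro sum.cong) (simp_all add: adjoint_B_scaleR)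
  moreover have "(1 / (1 + \<tau>)) *\<^sub>R (x k - \<tau> *\<^sub>R (\<gamma> *\<^sub>R S) + \<tau> *\<^sub>R (x k - \<gamma> *\<^sub>R Df (x k)))
      = x k - t *\<^sub>R (Df (x k) + S)" for S
  proof -
    have "x k - \<tau> *\<^sub>R (\<gamma> *\<^sub>R S) + \<tau> *\<^sub>R (x k - \<gamma> *\<^sub>R Df (x k))
         = (1 + \<tau>) *\<^sub>R x k - (\<tau> * \<gamma>) *\<^sub>R (Df (x k) + S)"
      by (simp add: algebra_simps)
    then show ?thesis using tau_pos unfolding t_def by (simp add: scaleR_diff_right)
  qed
  ultimately show ?thesis unfolding x_iter t_def by simp
qed

lemma v_Suc_prox: "i < m \<Longrightarrow> v (Suc k) i = prox_on (V i) (s i) (conj_on (V i) (h i))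
     (v k i + s i *\<^sub>R B i (2 *\<^sub>R x (Suc k) - x k))"
proof -
  assume i: "i < m"
  have "w i \<noteq> 0" "\<gamma> \<noteq> 0" using w_range[OF i] gamma_range by auto
  moreover have "(w i / \<gamma>) *\<^sub>R (y k i + \<sigma> *\<^sub>R B i (2 *\<^sub>R x (Suc k) - x k))
      = v k i + s i *\<^sub>R B i (2 *\<^sub>R x (Suc k) - x k)"
    unfolding v_def s_def by (simp add: scaleR_add_right)
  ultimately show ?thesis unfolding v_def[of "Suc k"] y_iter[OF i] s_def by simp
qed

text \<open>Optimality conditions of the two proximal steps: \<open>g_subgrad k \<in> \<partial>g (x (k+1))\<close> and
  \<open>v (k+1) i \<in> \<partial>h i (h_point k i)\<close>; the latter comes from Moreau's decomposition.\<close>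

definition "g_subgrad k = (1/t) *\<^sub>R (x k - t *\<^sub>R (Df (x k) + (\<Sum>i<m. adjoint (B i) (v k i))) - x (Suc k))"
definition "h_point k i = (1 / s i) *\<^sub>R (v k i + s i *\<^sub>R B i (2 *\<^sub>R x (Suc k) - x k) - v (Suc k) i)"

definition "KKT a b \<longleftrightarrow> (- Df a - (\<Sum>i<m. adjoint (B i) (b i))) \<in> subdiff_on UNIV g a
     \<and> (\<forall>i<m. b i \<in> subdiff_on (V i) (h i) (B i a))"

lemma prox_argument_in_V:
  "i < m \<Longrightarrow> v k i \<in> V i \<Longrightarrow> v k i + s i *\<^sub>R B i (2 *\<^sub>R x (Suc k) - x k) \<in> V i"
  using V_subspace B_range by (intro subspace_add subspace_scale) auto

lemma v_in_V: "i < m \<Longrightarrow> v k i \<in> V i"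
proof (induction k)
  case 0
  then show ?case unfolding v_def using y0 V_subspace by (auto intro: subspace_scale)
next
  case (Suc k)
  note r = prox_argument_in_V[OF Suc.prems Suc.IH[OF Suc.prems]]
  obtain p where "p \<in> V i" "prox_on (V i) (s i) (conj_on (V i) (h i))
      (v k i + s i *\<^sub>R B i (2 *\<^sub>R x (Suc k) - x k))
      = v k i + s i *\<^sub>R B i (2 *\<^sub>R x (Suc k) - x k) - s i *\<^sub>R p"
    using prox_conj_on_Moreau[OF V_subspace V_closed h_G0 s_pos r] Suc.prems by blast
  then show ?case unfolding v_Suc_prox[OF Suc.prems] using r V_subspace[OF Suc.prems]
    by (auto intro: subspace_diff subspace_scale)
qed

lemma g_subgrad_in_subdiff: "g_subgrad k \<in> subdiff_on UNIV g (x (Suc k))"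
  using prox_on_subdiff[OF g_G0 subspace_UNIV closed_UNIV t_pos UNIV_I]
  unfolding g_subgrad_def x_Suc_prox[of k] by simp

lemma h_point_subdiff:
  assumes i: "i < m"
  shows "h_point k i \<in> V i \<and> v (Suc k) i \<in> subdiff_on (V i) (h i) (h_point k i)"
proof -
  define r where "r = v k i + s i *\<^sub>R B i (2 *\<^sub>R x (Suc k) - x k)"
  have rV: "r \<in> V i" unfolding r_def by (rule prox_argument_in_V[OF i v_in_V[OF i]])
  obtain p where p: "p \<in> V i" "prox_on (V i) (s i) (conj_on (V i) (h i)) r = r - s i *\<^sub>R p"
      "r - s i *\<^sub>R p \<in> subdiff_on (V i) (h i) p"
    using prox_conj_on_Moreau[OF V_subspace[OF i] V_closed[OF i] h_G0[OF i] s_pos[OF i] rV] by blast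
  have "v (Suc k) i = r - s i *\<^sub>R p" unfolding v_Suc_prox[OF i] r_def[symmetric] p(2) ..
  moreover have "h_point k i = p"
    unfolding h_point_def r_def[symmetric] calculation using s_pos[OF i] by simp
  ultimately show ?thesis using p by simp
qed

lemma inner_g_subgrad: "inner (g_subgrad k) z = inner (x k - x (Suc k)) z / t - inner (Df (x k)) z
     - (\<Sum>i<m. inner (v k i) (B i z))"
proof -
  have "g_subgrad k = (1/t) *\<^sub>R (x k - x (Suc k)) - (Df (x k) + (\<Sum>i<m. adjoint (B i) (v k i)))"
    unfolding g_subgrad_def using t_pos by (simp add: algebra_simps)
  then show ?thesis by (simp add: inner_diff_left inner_add_left inner_sum_adjoint_B)
qed

lemma h_point_eq: "i < m \<Longrightarrow> h_point k i
    = B i (x (Suc k)) + B i (x (Suc k) - x k) - (1 / s i) *\<^sub>R (v (Suc k) i - v k i)"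
  unfolding h_point_def using s_pos[of i] B_add[of i "x (Suc k)" "x (Suc k) - x k"]
  by (simp add: algebra_simps scaleR_2)

lemma KKT_exists: "\<exists>a b. KKT a b"
proof -
  obtain xh p q where H: "p \<in> subdiff_on UNIV g xh" "\<forall>i<m. q i \<in> subdiff_on (V i) (h i) (B i xh)"
    "Df xh + p + (\<Sum>i<m. adjoint (B i) (q i)) = 0" using sol_exists by blast
  have "p = - Df xh - (\<Sum>i<m. adjoint (B i) (q i))" using H(3)
    by (simp add: algebra_simps eq_neg_iff_add_eq_0 add.assoc)
  then have "KKT xh q" unfolding KKT_def using H by simp
  then show ?thesis by blast
qed

text \<open>The inner product of the primal-dual metric, on pairs of a primal vector and a family of dual
  vectors.\<close>
definition "M_inner d e d' e' = inner d d' / t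
    + (\<Sum>i<m. inner (e i) (e' i) / s i - inner (e i) (B i d') - inner (e' i) (B i d))"

lemma M_inner_self:
  "M_inner d e d e = norm d^2 / t + (\<Sum>i<m. norm (e i)^2 / s i - 2 * inner (e i) (B i d))"
  unfolding M_inner_def by (simp add: power2_norm_eq_inner)

lemma step_sizes_bound: "(\<Sum>i<m. s i * (onorm (B i))^2) < 1/t - L/2"
proof -
  define N where "N = (\<Sum>i<m. w i * (onorm (B i))^2)"
  have "(\<Sum>i<m. s i * (onorm (B i))^2) = \<sigma> / \<gamma> * N"
    unfolding s_def N_def sum_distrib_left by (intro sum.cong) auto
  moreover have "\<sigma> * N < 1 / \<tau>" using step_cond tau_pos unfolding N_def by (simp add: field_simps)
  then have "\<sigma> / \<gamma> * N < 1 / (\<tau> * \<gamma>)" using gamma_range tau_pos by (simp add: field_simps)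
  moreover have "L / 2 < 1 / \<gamma>" using gamma_range L_pos by (simp add: field_simps)
  moreover have "1/t = 1 / (\<tau> * \<gamma>) + 1 / \<gamma>"
    unfolding t_def using tau_pos gamma_range by (simp add: field_simps)
  ultimately show ?thesis by argo
qed

lemma M_inner_coercive:
  "\<exists>\<epsilon>>0. \<forall>d e. \<epsilon> * (norm d^2 + (\<Sum>i<m. norm (e i)^2)) \<le> M_inner d e d e - L/2 * norm d^2"
proof -
  obtain \<epsilon> where "\<epsilon> > 0" and \<epsilon>: "\<And>d e. \<epsilon> * (norm d^2 + (\<Sum>i<m. norm (e i)^2))
      \<le> (1/t - L/2) * norm d^2 + (\<Sum>i<m. norm (e i)^2 / s i - 2 * inner (e i) (B i d))"
    using coupled_quadratic_form_coercive[OF B_lin s_pos step_sizes_bound] by blast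
  have "(1/t - L/2) * norm d^2 + (\<Sum>i<m. norm (e i)^2 / s i - 2 * inner (e i) (B i d))
      = M_inner d e d e - L/2 * norm d^2" for d e
    unfolding M_inner_self by (simp add: left_diff_distrib)
  then show ?thesis using \<open>\<epsilon> > 0\<close> \<epsilon> by (intro exI[of _ \<epsilon>]) simp
qed

lemma M_inner_self_nonneg: "0 \<le> M_inner d e d e"
proof -
  obtain \<epsilon> where "\<epsilon> > 0" "\<epsilon> * (norm d^2 + (\<Sum>i<m. norm (e i)^2)) \<le> M_inner d e d e - L/2 * norm d^2"
    using M_inner_coercive by blast
  moreover have "0 \<le> \<epsilon> * (norm d^2 + (\<Sum>i<m. norm (e i)^2))"
    using calculation(1) by (intro mult_nonneg_nonneg add_nonneg_nonneg sum_nonneg) auto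
  ultimately have "L/2 * norm d^2 \<le> M_inner d e d e" by simp
  then show ?thesis using L_pos by (meson order_trans zero_le_power2 mult_nonneg_nonneg
        divide_nonneg_pos less_imp_le zero_less_numeral norm_ge_zero)
qed

lemma M_inner_diff_left:
  "M_inner a b d e - M_inner a' b' d e = M_inner (a - a') (\<lambda>i. b i - b' i) d e"
proof -
  have "(\<Sum>i<m. inner (b i) (e i) / s i - inner (b i) (B i d) - inner (e i) (B i a))
      - (\<Sum>i<m. inner (b' i) (e i) / s i - inner (b' i) (B i d) - inner (e i) (B i a'))
      = (\<Sum>i<m. inner (b i - b' i) (e i) / s i - inner (b i - b' i) (B i d) - inner (e i) (B i (a - a')))"
    unfolding sum_subtractf[symmetric]
    by (intro sum.cong refl) (simp add: inner_diff_left inner_diff_right B_diff diff_divide_distrib)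
  then show ?thesis unfolding M_inner_def by (simp add: inner_diff_left diff_divide_distrib)
qed

lemma M_inner_commute: "M_inner a b d e = M_inner d e a b"
  unfolding M_inner_def by (simp add: inner_commute algebra_simps)

definition "energy a b k = M_inner (x k - a) (\<lambda>i. v k i - b i) (x k - a) (\<lambda>i. v k i - b i)"
definition "energy_drop k = M_inner (x (Suc k) - x k) (\<lambda>i. v (Suc k) i - v k i)
    (x (Suc k) - x k) (\<lambda>i. v (Suc k) i - v k i) - L/2 * norm (x (Suc k) - x k)^2"

lemma energy_nonneg: "0 \<le> energy a b k"
  unfolding energy_def by (rule M_inner_self_nonneg)

lemma energy_drop_coercive: "\<exists>\<epsilon>>0. \<forall>k.
    \<epsilon> * (norm (x (Suc k) - x k)^2 + (\<Sum>i<m. norm (v (Suc k) i - v k i)^2)) \<le> energy_drop k"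
proof -
  obtain \<epsilon> where "\<epsilon> > 0"
    and \<epsilon>: "\<And>d e. \<epsilon> * (norm d^2 + (\<Sum>i<m. norm (e i)^2)) \<le> M_inner d e d e - L/2 * norm d^2"
    using M_inner_coercive by blast
  then show ?thesis unfolding energy_drop_def by (intro exI[of _ \<epsilon>] conjI allI \<epsilon>)
qed

lemma energy_drop_nonneg: "0 \<le> energy_drop k"
proof -
  obtain \<epsilon> where "\<epsilon> > 0"
    "\<epsilon> * (norm (x (Suc k) - x k)^2 + (\<Sum>i<m. norm (v (Suc k) i - v k i)^2)) \<le> energy_drop k"
    using energy_drop_coercive by blast
  moreover have "0 \<le> \<epsilon> * (norm (x (Suc k) - x k)^2 + (\<Sum>i<m. norm (v (Suc k) i - v k i)^2))"
    using calculation(1) by (intro mult_nonneg_nonneg add_nonneg_nonneg sum_nonneg) auto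
  ultimately show ?thesis by linarith
qed

lemma g_step_monotone:
  assumes "KKT a b"
  shows "0 \<le> inner (x k - x (Suc k)) (x (Suc k) - a) / t - inner (Df (x k) - Df a) (x (Suc k) - a)
    - (\<Sum>i<m. inner (v k i - b i) (B i (x (Suc k) - a)))"
proof -
  have "- Df a - (\<Sum>i<m. adjoint (B i) (b i)) \<in> subdiff_on UNIV g a" using assms unfolding KKT_def by blast
  from subdiff_on_monotone[OF g_subgrad_in_subdiff this]
  have "0 \<le> inner (g_subgrad k - (- Df a - (\<Sum>i<m. adjoint (B i) (b i)))) (x (Suc k) - a)" by simp
  then show ?thesis
    by (simp add: inner_diff_left inner_g_subgrad inner_sum_adjoint_B sum_subtractf)
qed

lemma h_step_monotone:
  assumes "KKT a b" and i: "i < m"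
  shows "0 \<le> inner (v (Suc k) i - b i) (B i (x (Suc k) - a) + B i (x (Suc k) - x k)
    - (1 / s i) *\<^sub>R (v (Suc k) i - v k i))"
proof -
  have "b i \<in> subdiff_on (V i) (h i) (B i a)" using assms unfolding KKT_def by blast
  from subdiff_on_monotone[OF conjunct2[OF h_point_subdiff[OF i]] this
      conjunct1[OF h_point_subdiff[OF i]] B_range[OF i]]
  show ?thesis unfolding h_point_eq[OF i] B_diff[OF i] by (simp add: algebra_simps)
qed

lemma dual_three_point_identity:
  assumes i: "i < m"
  shows "2 * (inner (e + de) (B i (d + dd)) + inner (e + de) (B i dd) - inner (e + de) de / s i
      - inner e (B i (d + dd)))
    = (norm e^2 / s i - 2 * inner e (B i d)) - (norm (e + de)^2 / s i - 2 * inner (e + de) (B i (d + dd)))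
      - (norm de^2 / s i - 2 * inner de (B i dd))"
proof -
  have "norm e^2 = norm (e + de)^2 - 2 * inner (e + de) de + norm de^2"
    using norm_diff_power2_inner[of "e + de" de] by simp
  then have "norm e^2 / s i - norm (e + de)^2 / s i - norm de^2 / s i = - 2 * inner (e + de) de / s i"
    by (simp add: diff_divide_distrib add_divide_distrib)
  moreover have "2 * (inner (e + de) de / s i) = 2 * inner (e + de) de / s i" by simp
  moreover have "inner (e + de) (B i (d + dd))
      = inner e (B i d) + inner e (B i dd) + inner de (B i d) + inner de (B i dd)"
    by (simp add: B_add[OF i] inner_add_left inner_add_right)
  moreover have "inner (e + de) (B i dd) = inner e (B i dd) + inner de (B i dd)"
    by (simp add: inner_add_left)
  moreover have "inner e (B i (d + dd)) = inner e (B i d) + inner e (B i dd)"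
    by (simp add: B_add[OF i] inner_add_right)
  ultimately show ?thesis by argo
qed

lemma energy_decrease:
  assumes K: "KKT a b"
  shows "energy a b (Suc k) + energy_drop k \<le> energy a b k"
proof -
  define X dx where "X = x k - a" and "dx = x (Suc k) - x k"
  define Y dv where "Y i = v k i - b i" and "dv i = v (Suc k) i - v k i" for i
  define H where "H i = inner (Y i + dv i) (B i (X + dx)) + inner (Y i + dv i) (B i dx)
    - inner (Y i + dv i) (dv i) / s i" for i
  have X': "x (Suc k) - a = X + dx" and Y': "v (Suc k) i - b i = Y i + dv i" for i
    unfolding X_def dx_def Y_def dv_def by simp_all
  have mg: "0 \<le> inner (- dx) (X + dx) / t - inner (Df (x k) - Df a) (X + dx)
      - (\<Sum>i<m. inner (Y i) (B i (X + dx)))"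
    using g_step_monotone[OF K, of k] unfolding X' Y_def dx_def by simp
  have "0 \<le> H i" if i: "i < m" for i
    using h_step_monotone[OF K i, of k] unfolding H_def X' Y' dx_def dv_def
    by (simp add: inner_diff_right inner_add_right)
  then have mh: "0 \<le> (\<Sum>i<m. H i)" by (intro sum_nonneg) auto
  have coco: "- inner (Df (x k) - Df a) (X + dx) \<le> L / 4 * norm dx^2"
    using cocoercive_shift_bound[OF L_pos gradient_cocoercive[OF f_conv f_grad Df_lip L_pos]]
    unfolding X_def .
  have "2 * inner (- dx) (X + dx) / t = (norm X^2 - norm (X + dx)^2 - norm dx^2) / t"
    by (simp add: norm_add_power2_inner inner_add_right inner_commute dot_square_norm)
  moreover have "(norm X^2 - norm (X + dx)^2 - norm dx^2) / t
      = norm X^2 / t - norm (X + dx)^2 / t - norm dx^2 / t"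
    by (simp add: diff_divide_distrib)
  moreover have "2 * ((\<Sum>i<m. H i) - (\<Sum>i<m. inner (Y i) (B i (X + dx))))
      = (\<Sum>i<m. norm (Y i)^2 / s i - 2 * inner (Y i) (B i X))
      - (\<Sum>i<m. norm (Y i + dv i)^2 / s i - 2 * inner (Y i + dv i) (B i (X + dx)))
      - (\<Sum>i<m. norm (dv i)^2 / s i - 2 * inner (dv i) (B i dx))"
    unfolding H_def sum_subtractf[symmetric] sum_distrib_left
    using dual_three_point_identity by (intro sum.cong) auto
  moreover have "energy a b k = norm X^2 / t + (\<Sum>i<m. norm (Y i)^2 / s i - 2 * inner (Y i) (B i X))"
    "energy a b (Suc k) = norm (X + dx)^2 / t
      + (\<Sum>i<m. norm (Y i + dv i)^2 / s i - 2 * inner (Y i + dv i) (B i (X + dx)))"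
    "energy_drop k = norm dx^2 / t - L/2 * norm dx^2
      + (\<Sum>i<m. norm (dv i)^2 / s i - 2 * inner (dv i) (B i dx))"
    unfolding energy_def energy_drop_def M_inner_self X' Y' by (simp_all add: X_def Y_def dx_def dv_def)
  ultimately show ?thesis using mg mh coco by argo
qed

lemma energy_coercive:
  "\<exists>\<epsilon>>0. \<forall>a b k. \<epsilon> * (norm (x k - a)^2 + (\<Sum>i<m. norm (v k i - b i)^2)) \<le> energy a b k"
proof -
  obtain \<epsilon> where "\<epsilon> > 0"
    and \<epsilon>: "\<And>d e. \<epsilon> * (norm d^2 + (\<Sum>i<m. norm (e i)^2)) \<le> M_inner d e d e - L/2 * norm d^2"
    using M_inner_coercive by blast
  moreover have "\<epsilon> * (norm d^2 + (\<Sum>i<m. norm (e i)^2)) \<le> M_inner d e d e" for d e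
    using \<epsilon>[of d e] L_pos by (smt (verit) divide_nonneg_pos mult_nonneg_nonneg zero_le_power2)
  ultimately show ?thesis unfolding energy_def by (intro exI[of _ \<epsilon>] conjI allI) simp_all
qed

lemma energy_le_initial: "KKT a b \<Longrightarrow> energy a b k \<le> energy a b 0"
proof (induction k)
  case (Suc k)
  then show ?case using energy_decrease[OF Suc.prems, of k] energy_drop_nonneg[of k] by argo
qed simp

lemma energy_convergent: "KKT a b \<Longrightarrow> convergent (\<lambda>k. energy a b k)"
proof -
  assume K: "KKT a b"
  have "energy a b (Suc k) \<le> energy a b k" for k
    using energy_decrease[OF K, of k] energy_drop_nonneg[of k] by argo
  then have "decseq (\<lambda>k. energy a b k)" unfolding decseq_Suc_iff by blast
  then obtain l where "(\<lambda>k. energy a b k) \<longlonglongrightarrow> l"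
    by (rule decseq_convergent[where B = 0]) (use energy_nonneg in auto)
  then show ?thesis unfolding convergent_def by blast
qed

lemma energy_drop_tendsto_zero: "energy_drop \<longlonglongrightarrow> 0"
proof -
  obtain a b where K: "KKT a b" using KKT_exists by blast
  have "(\<Sum>k<n. energy_drop k) \<le> energy a b 0 - energy a b n" for n
  proof (induction n)
    case (Suc n) then show ?case using energy_decrease[OF K, of n] by simp
  qed simp
  then have "(\<Sum>k<n. energy_drop k) \<le> energy a b 0" for n using energy_nonneg[of a b n] by smt
  then have "summable energy_drop" using energy_drop_nonneg by (intro summableI_nonneg_bounded) auto
  then show ?thesis by (rule summable_LIMSEQ_zero)
qed

lemma x_increment_tendsto_zero: "(\<lambda>k. x (Suc k) - x k) \<longlonglongrightarrow> 0"
  and v_increment_tendsto_zero: "i < m \<Longrightarrow> (\<lambda>k. v (Suc k) i - v k i) \<longlonglongrightarrow> 0"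
proof -
  obtain \<epsilon> where e: "\<epsilon> > 0" "\<And>k. \<epsilon> * (norm (x (Suc k) - x k)^2
      + (\<Sum>i<m. norm (v (Suc k) i - v k i)^2)) \<le> energy_drop k"
    using energy_drop_coercive by blast
  note bound = mult_sum_le_imp_le[OF e(1) e(2) zero_le_power2 zero_le_power2]
  have lim: "(\<lambda>k. energy_drop k / \<epsilon>) \<longlonglongrightarrow> 0"
    using tendsto_divide[OF energy_drop_tendsto_zero tendsto_const, of \<epsilon>] e(1) by simp
  show "(\<lambda>k. x (Suc k) - x k) \<longlonglongrightarrow> 0" by (rule tendsto_zero_if_norm_power2_le[OF bound(1) lim])
  show "i < m \<Longrightarrow> (\<lambda>k. v (Suc k) i - v k i) \<longlonglongrightarrow> 0"
    by (rule tendsto_zero_if_norm_power2_le[OF bound(2) lim])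
qed

lemma iterates_bounded: "\<exists>C. \<forall>k. norm (x k) \<le> C \<and> (\<forall>i<m. norm (v k i) \<le> C)"
proof -
  obtain a b where K: "KKT a b" using KKT_exists by blast
  obtain \<epsilon> where e: "\<epsilon> > 0"
    "\<And>k. \<epsilon> * (norm (x k - a)^2 + (\<Sum>i<m. norm (v k i - b i)^2)) \<le> energy a b 0"
    using energy_coercive energy_le_initial[OF K] order_trans by meson
  note bound = mult_sum_le_imp_le[OF e(1) e(2) zero_le_power2 zero_le_power2]
  define R where "R = sqrt (energy a b 0 / \<epsilon>)"
  define C where "C = R + norm a + (\<Sum>i<m. norm (b i))"
  have "norm (x k) \<le> C" for k
  proof -
    have "norm (x k - a) \<le> R" unfolding R_def using bound(1) by (simp add: real_le_rsqrt)
    moreover have "0 \<le> (\<Sum>i<m. norm (b i))" by (simp add: sum_nonneg)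
    ultimately show ?thesis using norm_triangle_sub[of "x k" a] unfolding C_def by simp
  qed
  moreover have "norm (v k i) \<le> C" if i: "i < m" for k i
  proof -
    have "norm (v k i - b i) \<le> R" unfolding R_def using bound(2)[OF i] by (simp add: real_le_rsqrt)
    moreover have "norm (b i) \<le> (\<Sum>i<m. norm (b i))" using i by (intro member_le_sum) auto
    ultimately show ?thesis using norm_triangle_sub[of "v k i" "b i"] norm_ge_zero[of a]
      unfolding C_def by linarith
  qed
  ultimately show ?thesis by blast
qed

definition "gap_remainder a \<beta> k
  = inner (x k - x (Suc k)) (x (Suc k) - a) / t - inner (Df (x k)) (x (Suc k) - x k)
    + (\<Sum>i<m. inner (v (Suc k) i - v k i) (B i (x (Suc k)))
        + inner (v (Suc k) i - \<beta> i) (B i (x (Suc k) - x k))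
        - inner (v (Suc k) i - \<beta> i) (v (Suc k) i - v k i) / s i)"

text \<open>Monotonicity of \<open>\<partial>g\<close>, \<open>\<partial>h i\<close> and \<open>Df\<close> tested against an arbitrary point \<open>(a, b)\<close> of their
  graphs; the second summand vanishes along the iteration.\<close>
lemma monotone_gap_step:
  assumes \<alpha>: "\<alpha> \<in> subdiff_on UNIV g a"
    and \<beta>: "\<And>i. i < m \<Longrightarrow> b i \<in> V i \<and> \<beta> i \<in> subdiff_on (V i) (h i) (b i)"
  shows "0 \<le> (- inner (Df a) (x k - a) - inner \<alpha> (x (Suc k) - a)
      + (\<Sum>i<m. inner (v k i) (B i a) - inner (v (Suc k) i) (b i)
          - inner (\<beta> i) (B i (x (Suc k))) + inner (\<beta> i) (b i)))
    + gap_remainder a \<beta> k"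
proof -
  define X X' dx where "X = x k" and "X' = x (Suc k)" and "dx = x (Suc k) - x k"
  define Y Y' dv where "Y i = v k i" and "Y' i = v (Suc k) i" and "dv i = v (Suc k) i - v k i" for i
  have mg: "0 \<le> inner (g_subgrad k - \<alpha>) (X' - a)"
    unfolding X'_def by (rule subdiff_on_monotone[OF g_subgrad_in_subdiff \<alpha>]) auto
  have mh: "0 \<le> (\<Sum>i<m. inner (Y' i - \<beta> i) (h_point k i - b i))"
    unfolding Y'_def using subdiff_on_monotone h_point_subdiff \<beta> by (intro sum_nonneg) blast
  have "inner (g_subgrad k - \<alpha>) (X' - a) = inner (X - X') (X' - a) / t
      - inner (Df X) (X' - a) - (\<Sum>i<m. inner (Y i) (B i (X' - a))) - inner \<alpha> (X' - a)"
    unfolding X_def X'_def Y_def by (simp add: inner_diff_left inner_g_subgrad)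
  moreover have "0 \<le> inner (Df X - Df a) (X - a)"
    using gradient_cocoercive[OF f_conv f_grad Df_lip L_pos, of X a] L_pos
    by (meson divide_nonneg_pos order_trans zero_le_power2)
  moreover have "inner (Df X) (X' - a) = inner (Df X) (X - a) + inner (Df X) dx"
    unfolding dx_def X_def X'_def by (simp add: inner_diff_right)
  moreover have "inner (Df X - Df a) (X - a) = inner (Df X) (X - a) - inner (Df a) (X - a)"
    by (simp add: inner_diff_left)
  moreover have "- inner (Y i) (B i (X' - a)) + inner (Y' i - \<beta> i) (h_point k i - b i)
      = (inner (Y i) (B i a) - inner (Y' i) (b i) - inner (\<beta> i) (B i X') + inner (\<beta> i) (b i))
      + (inner (dv i) (B i X') + inner (Y' i - \<beta> i) (B i dx) - inner (Y' i - \<beta> i) (dv i) / s i)"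
    if i: "i < m" for i
  proof -
    have "h_point k i - b i = (B i X' - b i) + B i dx - (1 / s i) *\<^sub>R dv i"
      unfolding h_point_eq[OF i] X'_def dx_def dv_def by (simp add: algebra_simps)
    then have "inner (Y' i - \<beta> i) (h_point k i - b i) = inner (Y' i) (B i X') - inner (Y' i) (b i)
        - inner (\<beta> i) (B i X') + inner (\<beta> i) (b i) + inner (Y' i - \<beta> i) (B i dx)
        - inner (Y' i - \<beta> i) (dv i) / s i"
      by (simp add: inner_diff_left inner_diff_right inner_add_right)
    moreover have "inner (Y i) (B i (X' - a)) = inner (Y i) (B i X') - inner (Y i) (B i a)"
      by (simp add: B_diff[OF i] inner_diff_right)
    moreover have "inner (dv i) (B i X') = inner (Y' i) (B i X') - inner (Y i) (B i X')"
      unfolding dv_def Y_def Y'_def by (simp add: inner_diff_left)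
    ultimately show ?thesis by argo
  qed
  then have "- (\<Sum>i<m. inner (Y i) (B i (X' - a))) + (\<Sum>i<m. inner (Y' i - \<beta> i) (h_point k i - b i))
      = (\<Sum>i<m. inner (Y i) (B i a) - inner (Y' i) (b i) - inner (\<beta> i) (B i X') + inner (\<beta> i) (b i))
      + (\<Sum>i<m. inner (dv i) (B i X') + inner (Y' i - \<beta> i) (B i dx) - inner (Y' i - \<beta> i) (dv i) / s i)"
    by (simp add: sum.distrib[symmetric] sum_negf[symmetric] sum_subtractf[symmetric])
  ultimately show ?thesis using mg mh
    unfolding gap_remainder_def X_def X'_def dx_def Y_def Y'_def dv_def by argo
qed

lemma gap_remainder_tendsto_zero: "(\<lambda>k. gap_remainder a \<beta> k) \<longlonglongrightarrow> 0"
proof -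
  define dx where "dx k = x (Suc k) - x k" for k
  define dv where "dv k i = v (Suc k) i - v k i" for k i
  note dx = x_increment_tendsto_zero[folded dx_def]
  note dv = v_increment_tendsto_zero[folded dv_def]
  obtain C where C: "\<And>k. norm (x k) \<le> C" "\<And>k i. i < m \<Longrightarrow> norm (v k i) \<le> C"
    using iterates_bounded by blast
  have Df_bounded: "norm (Df (x k)) \<le> norm (Df 0) + L * C" for k
    using norm_triangle_sub[of "Df (x k)" "Df 0"] Df_lip[of "x k" 0] C(1)[of k] L_pos
    by (smt (verit) diff_zero mult_left_mono)
  have "(\<lambda>k. inner (x (Suc k) - a) (- dx k) / t - inner (Df (x k)) (dx k)) \<longlonglongrightarrow> 0 / t - 0"
  proof (intro tendsto_intros tendsto_inner_bounded_zero)
    show "norm (x (Suc k) - a) \<le> C + norm a" for k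
      using C(1)[of "Suc k"] norm_triangle_ineq4[of "x (Suc k)" a] by argo
  qed (use dx Df_bounded t_pos in \<open>auto intro: tendsto_minus_cancel_left[THEN iffD1]\<close>)
  then have rem_x: "(\<lambda>k. inner (x k - x (Suc k)) (x (Suc k) - a) / t
      - inner (Df (x k)) (x (Suc k) - x k)) \<longlonglongrightarrow> 0"
    unfolding dx_def by (simp add: inner_commute)
  have rem_v: "(\<lambda>k. \<Sum>i<m. inner (dv k i) (B i (x (Suc k)))
      + inner (v (Suc k) i - \<beta> i) (B i (dx k)) - inner (v (Suc k) i - \<beta> i) (dv k i) / s i) \<longlonglongrightarrow> 0"
  proof (intro tendsto_null_sum)
    fix i assume "i \<in> {..<m}"
    then have i: "i < m" by simp
    have bnd: "norm (v (Suc k) i - \<beta> i) \<le> C + norm (\<beta> i)" for k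
      using C(2)[OF i, of "Suc k"] norm_triangle_ineq4[of "v (Suc k) i" "\<beta> i"] by argo
    have "norm (B i (x (Suc k))) \<le> onorm (B i) * C" for k
      using onorm[OF B_lin[OF i]] C(1) mult_left_mono[OF C(1) onorm_pos_le[OF B_lin[OF i]]]
      by (meson order_trans)
    from tendsto_inner_bounded_zero[OF this dv[OF i]]
    have 1: "(\<lambda>k. inner (dv k i) (B i (x (Suc k)))) \<longlonglongrightarrow> 0" by (simp add: inner_commute)
    have "(\<lambda>k. B i (dx k)) \<longlonglongrightarrow> 0"
      using bounded_linear.tendsto[OF B_lin[OF i] dx]
        linear_0[OF bounded_linear.linear[OF B_lin[OF i]]] by simp
    then have 2: "(\<lambda>k. inner (v (Suc k) i - \<beta> i) (B i (dx k))) \<longlonglongrightarrow> 0"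
      by (rule tendsto_inner_bounded_zero[OF bnd])
    have 3: "(\<lambda>k. inner (v (Suc k) i - \<beta> i) (dv k i)) \<longlonglongrightarrow> 0"
      by (rule tendsto_inner_bounded_zero[OF bnd dv[OF i]])
    show "(\<lambda>k. inner (dv k i) (B i (x (Suc k))) + inner (v (Suc k) i - \<beta> i) (B i (dx k))
        - inner (v (Suc k) i - \<beta> i) (dv k i) / s i) \<longlonglongrightarrow> 0"
      using tendsto_diff[OF tendsto_add[OF 1 2] tendsto_divide[OF 3 tendsto_const, of "s i"]]
        s_pos[OF i] by simp
  qed
  show ?thesis
    using tendsto_add[OF rem_x rem_v] unfolding gap_remainder_def dx_def dv_def by simp
qed

lemma weak_cluster_gap_nonneg:
  assumes r: "strict_mono r" and wx: "weakly_converges (\<lambda>n. x (r n)) xb"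
    and wv: "\<And>i. i < m \<Longrightarrow> weakly_converges (\<lambda>n. v (r n) i) (vb i)"
    and \<alpha>: "\<alpha> \<in> subdiff_on UNIV g a"
    and \<beta>: "\<And>i. i < m \<Longrightarrow> b i \<in> V i \<and> \<beta> i \<in> subdiff_on (V i) (h i) (b i)"
  shows "0 \<le> - inner (Df a) (xb - a) - inner \<alpha> (xb - a)
    + (\<Sum>i<m. inner (vb i) (B i a) - inner (vb i) (b i) - inner (\<beta> i) (B i xb) + inner (\<beta> i) (b i))"
proof -
  have wx': "weakly_converges (\<lambda>n. x (Suc (r n))) xb"
    using weakly_converges_diff_tendsto_zero[OF wx] LIMSEQ_subseq_LIMSEQ[OF x_increment_tendsto_zero r]
    by (simp add: o_def)
  have wv': "weakly_converges (\<lambda>n. v (Suc (r n)) i) (vb i)" if i: "i < m" for i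
    using weakly_converges_diff_tendsto_zero[OF wv[OF i]]
      LIMSEQ_subseq_LIMSEQ[OF v_increment_tendsto_zero[OF i] r] by (simp add: o_def)
  have lin_x: "(\<lambda>n. - inner (Df a) (x (r n) - a) - inner \<alpha> (x (Suc (r n)) - a))
      \<longlonglongrightarrow> - inner (Df a) (xb - a) - inner \<alpha> (xb - a)"
    unfolding inner_diff_right by (intro tendsto_intros weakly_convergesD' wx wx')
  have lin_v: "(\<lambda>n. \<Sum>i<m. inner (v (r n) i) (B i a) - inner (v (Suc (r n)) i) (b i)
          - inner (\<beta> i) (B i (x (Suc (r n)))) + inner (\<beta> i) (b i))
    \<longlonglongrightarrow> (\<Sum>i<m. inner (vb i) (B i a) - inner (vb i) (b i) - inner (\<beta> i) (B i xb) + inner (\<beta> i) (b i))"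
  proof (intro tendsto_sum)
    fix i assume "i \<in> {..<m}"
    then have i: "i < m" by simp
    have "(\<lambda>n. inner (\<beta> i) (B i (x (Suc (r n))))) \<longlonglongrightarrow> inner (\<beta> i) (B i xb)"
      using weakly_convergesD[OF wx', of "adjoint (B i) (\<beta> i)"]
      by (simp add: B_adjoint[OF i, symmetric] inner_commute)
    then show "(\<lambda>n. inner (v (r n) i) (B i a) - inner (v (Suc (r n)) i) (b i)
          - inner (\<beta> i) (B i (x (Suc (r n)))) + inner (\<beta> i) (b i))
        \<longlonglongrightarrow> inner (vb i) (B i a) - inner (vb i) (b i) - inner (\<beta> i) (B i xb) + inner (\<beta> i) (b i)"
      by (intro tendsto_add tendsto_diff tendsto_const weakly_convergesD wv wv' i)
  qed
  have rem: "(\<lambda>n. gap_remainder a \<beta> (r n)) \<longlonglongrightarrow> 0"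
    using LIMSEQ_subseq_LIMSEQ[OF gap_remainder_tendsto_zero r] by (simp add: o_def)
  have "\<forall>n. 0 \<le> (- inner (Df a) (x (r n) - a) - inner \<alpha> (x (Suc (r n)) - a)
      + (\<Sum>i<m. inner (v (r n) i) (B i a) - inner (v (Suc (r n)) i) (b i)
          - inner (\<beta> i) (B i (x (Suc (r n)))) + inner (\<beta> i) (b i)))
    + gap_remainder a \<beta> (r n)"
    using monotone_gap_step[of \<alpha> a b \<beta>] \<alpha> \<beta> by blast
  then have "0 \<le> - inner (Df a) (xb - a) - inner \<alpha> (xb - a)
    + (\<Sum>i<m. inner (vb i) (B i a) - inner (vb i) (b i) - inner (\<beta> i) (B i xb) + inner (\<beta> i) (b i))
    + 0"
    by (intro LIMSEQ_le_const[OF tendsto_add[OF tendsto_add[OF lin_x lin_v] rem]]) blast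
  then show ?thesis by simp
qed

lemma resolvent_gap_eq:
  assumes \<alpha>: "\<alpha> = (1 / lam) *\<^sub>R (xb - a) - (Df xb + (\<Sum>i<m. adjoint (B i) (vb i)))"
    and \<beta>: "\<And>i. i < m \<Longrightarrow> \<beta> i = B i xb + vb i - b i"
  shows "- inner (Df a) (xb - a) - inner \<alpha> (xb - a)
      + (\<Sum>i<m. inner (vb i) (B i a) - inner (vb i) (b i) - inner (\<beta> i) (B i xb) + inner (\<beta> i) (b i))
    = inner (Df xb - Df a) (xb - a) - norm (xb - a)^2 / lam - (\<Sum>i<m. norm (B i xb - b i)^2)"
proof -
  have "inner \<alpha> (xb - a) = norm (xb - a)^2 / lam - inner (Df xb) (xb - a)
      - (\<Sum>i<m. inner (vb i) (B i (xb - a)))"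
    unfolding \<alpha> by (simp add: inner_diff_left inner_add_left inner_sum_adjoint_B power2_norm_eq_inner)
  moreover have "inner (vb i) (B i a) - inner (vb i) (b i) - inner (\<beta> i) (B i xb) + inner (\<beta> i) (b i)
      = - inner (vb i) (B i (xb - a)) - norm (B i xb - b i)^2" if i: "i < m" for i
    unfolding \<beta>[OF i] B_diff[OF i]
    by (simp add: inner_diff_left inner_diff_right inner_add_left power2_norm_eq_inner
        inner_commute algebra_simps)
  then have "(\<Sum>i<m. inner (vb i) (B i a) - inner (vb i) (b i) - inner (\<beta> i) (B i xb)
      + inner (\<beta> i) (b i)) = - (\<Sum>i<m. inner (vb i) (B i (xb - a))) - (\<Sum>i<m. norm (B i xb - b i)^2)"
    by (simp add: sum_subtractf sum_negf)
  ultimately show ?thesis by (simp add: inner_diff_left)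
qed

text \<open>Minty-type argument: testing the gap inequality at the resolvents \<open>(a, b)\<close> of \<open>(xb, vb)\<close>
  forces \<open>a = xb\<close> and \<open>b i = B i xb\<close>.\<close>
lemma weak_cluster_KKT:
  assumes r: "strict_mono r" and wx: "weakly_converges (\<lambda>n. x (r n)) xb"
    and wv: "\<And>i. i < m \<Longrightarrow> weakly_converges (\<lambda>n. v (r n) i) (vb i)"
    and vb: "\<And>i. i < m \<Longrightarrow> vb i \<in> V i"
  shows "KKT xb vb"
proof -
  define lam where "lam = 1 / (2 * L)"
  have lam: "0 < lam" unfolding lam_def using L_pos by simp
  define c where "c = xb - lam *\<^sub>R (Df xb + (\<Sum>i<m. adjoint (B i) (vb i)))"
  define a where "a = prox_on UNIV lam g c"
  define \<alpha> where "\<alpha> = (1 / lam) *\<^sub>R (c - a)"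
  have \<alpha>: "\<alpha> \<in> subdiff_on UNIV g a"
    using prox_on_subdiff[OF g_G0 subspace_UNIV closed_UNIV lam UNIV_I, of c]
    unfolding \<alpha>_def a_def by simp
  have \<alpha>_eq: "\<alpha> = (1 / lam) *\<^sub>R (xb - a) - (Df xb + (\<Sum>i<m. adjoint (B i) (vb i)))"
    unfolding \<alpha>_def c_def using lam by (simp add: algebra_simps)
  define b where "b i = prox_on (V i) 1 (h i) (B i xb + vb i)" for i
  define \<beta> where "\<beta> i = B i xb + vb i - b i" for i
  have \<beta>: "b i \<in> V i \<and> \<beta> i \<in> subdiff_on (V i) (h i) (b i)" if i: "i < m" for i
    using prox_on_subdiff[OF h_G0[OF i] V_subspace[OF i] V_closed[OF i] zero_less_one,
        of "B i xb + vb i"] B_range[OF i] vb[OF i] V_subspace[OF i]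
    unfolding \<beta>_def b_def by (simp add: subspace_add)
  have "0 \<le> inner (Df xb - Df a) (xb - a) - norm (xb - a)^2 / lam - (\<Sum>i<m. norm (B i xb - b i)^2)"
    using weak_cluster_gap_nonneg[OF r wx wv \<alpha> \<beta>] resolvent_gap_eq[OF \<alpha>_eq, of \<beta> b] \<beta>_def
    by simp
  moreover have "inner (Df xb - Df a) (xb - a) \<le> L * norm (xb - a)^2"
    using norm_cauchy_schwarz[of "Df xb - Df a" "xb - a"]
      mult_right_mono[OF Df_lip[of xb a] norm_ge_zero[of "xb - a"]]
    by (simp add: power2_eq_square mult.assoc)
  moreover have "norm (xb - a)^2 / lam = 2 * L * norm (xb - a)^2" unfolding lam_def by simp
  moreover have "0 \<le> (\<Sum>i<m. norm (B i xb - b i)^2)" by (simp add: sum_nonneg)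
  moreover have "0 \<le> L * norm (xb - a)^2" using L_pos by simp
  ultimately have "L * norm (xb - a)^2 = 0" and sum0: "(\<Sum>i<m. norm (B i xb - b i)^2) = 0"
    by linarith+
  then have a: "a = xb" using L_pos by simp
  have "b i = B i xb" if "i < m" for i using sum0 that by (simp add: sum_nonneg_eq_0_iff)
  then have "vb i \<in> subdiff_on (V i) (h i) (B i xb)" if "i < m" for i
    using \<beta>[OF that] that unfolding \<beta>_def by simp
  moreover have "\<alpha> = - Df xb - (\<Sum>i<m. adjoint (B i) (vb i))"
    unfolding \<alpha>_eq a using lam by simp
  ultimately show ?thesis unfolding KKT_def using \<alpha> a by simp
qed

lemma weak_cluster_exists:
  fixes q :: "nat \<Rightarrow> nat"
  assumes q: "strict_mono q"
  shows "\<exists>r xb vb. strict_mono r \<and> weakly_converges (\<lambda>n. x (q (r n))) xb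
     \<and> (\<forall>i<m. weakly_converges (\<lambda>n. v (q (r n)) i) (vb i)) \<and> KKT xb vb"
proof -
  obtain C where C: "\<And>k. norm (x k) \<le> C" "\<And>k i. i < m \<Longrightarrow> norm (v k i) \<le> C"
    using iterates_bounded by blast
  obtain r1 xb where r1: "strict_mono r1" "weakly_converges (\<lambda>n. x (q (r1 n))) xb"
    using bounded_imp_weakly_convergent_subseq[of "\<lambda>n. x (q n)" C] C(1) by blast
  obtain r2 vb where r2: "strict_mono r2" "\<forall>i<m. weakly_converges (\<lambda>n. v (q (r1 (r2 n))) i) (vb i)"
    using bounded_imp_weakly_convergent_subseq_family[of m "\<lambda>n i. v (q (r1 n)) i" C] C(2) by blast
  define r where "r = r1 \<circ> r2"
  have r: "strict_mono r" unfolding r_def using r1(1) r2(1) by (rule strict_mono_o)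
  have wx: "weakly_converges (\<lambda>n. x (q (r n))) xb"
    using weakly_converges_subseq[OF r1(2) r2(1)] unfolding r_def by simp
  have wv: "\<forall>i<m. weakly_converges (\<lambda>n. v (q (r n)) i) (vb i)" using r2(2) unfolding r_def by simp
  have "vb i \<in> V i" if i: "i < m" for i
    by (rule weakly_converges_closed_subspace[OF V_subspace[OF i] V_closed[OF i],
          of "\<lambda>n. v (q (r n)) i"]) (use v_in_V[OF i] wv i in auto)
  then have "KKT xb vb" using weak_cluster_KKT[OF strict_mono_o[OF q r]] wx wv by simp
  then show ?thesis using r wx wv by blast
qed

lemma M_inner_weakly_continuous:
  assumes "weakly_converges p l" "\<And>i. i < m \<Longrightarrow> weakly_converges (\<lambda>n. q n i) (ql i)"
  shows "(\<lambda>n. M_inner (p n) (q n) d e) \<longlonglongrightarrow> M_inner l ql d e"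
proof -
  have "(\<lambda>n. inner (p n) d / t) \<longlonglongrightarrow> inner l d / t"
    by (intro tendsto_divide tendsto_const weakly_convergesD assms(1)) (use t_pos in simp)
  moreover have "(\<lambda>n. \<Sum>i<m. inner (q n i) (e i) / s i - inner (q n i) (B i d) - inner (e i) (B i (p n)))
      \<longlonglongrightarrow> (\<Sum>i<m. inner (ql i) (e i) / s i - inner (ql i) (B i d) - inner (e i) (B i l))"
  proof (rule tendsto_sum)
    fix i assume "i \<in> {..<m}"
  then have i: "i < m" by simp
  have "(\<lambda>n. inner (e i) (B i (p n))) \<longlonglongrightarrow> inner (e i) (B i l)"
    using weakly_convergesD'[OF assms(1), of "adjoint (B i) (e i)"]
    by (simp add: B_adjoint[OF i, symmetric] inner_commute)
  then show "(\<lambda>n. inner (q n i) (e i) / s i - inner (q n i) (B i d) - inner (e i) (B i (p n)))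
      \<longlonglongrightarrow> inner (ql i) (e i) / s i - inner (ql i) (B i d) - inner (e i) (B i l)"
    by (intro tendsto_diff tendsto_divide tendsto_const weakly_convergesD assms(2) i)
      (use s_pos[OF i] in auto)
  qed
  ultimately show ?thesis unfolding M_inner_def by (rule tendsto_add)
qed

lemma M_inner_diff_right:
  "M_inner d e a b - M_inner d e a' b' = M_inner d e (a - a') (\<lambda>i. b i - b' i)"
  using M_inner_diff_left[of a b d e a' b'] by (simp add: M_inner_commute[of d e])

lemma M_inner_self_diff: "M_inner (z - a) (\<lambda>i. e i - b i) (z - a) (\<lambda>i. e i - b i)
    = M_inner z e z e - 2 * M_inner z e a b + M_inner a b a b"
proof -
  have "M_inner (z - a) (\<lambda>i. e i - b i) (z - a) (\<lambda>i. e i - b i)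
      = M_inner z e (z - a) (\<lambda>i. e i - b i) - M_inner a b (z - a) (\<lambda>i. e i - b i)"
    by (simp add: M_inner_diff_left)
  also have "\<dots> = (M_inner z e z e - M_inner a b z e) - (M_inner z e a b - M_inner a b a b)"
    by (simp add: M_inner_commute[of _ _ "z - a"] M_inner_diff_left)
  finally show ?thesis using M_inner_commute[of a b z e] by simp
qed

text \<open>Opial's argument: by polarization the energies to two KKT points differ by a weakly continuous
  affine function of \<open>(x k, v k)\<close> plus a constant, so two weak cluster points that are KKT
  points cannot be distinguished by it.\<close>
lemma weak_cluster_unique:
  assumes r1: "strict_mono r1" "weakly_converges (\<lambda>n. x (r1 n)) x1"
      "\<forall>i<m. weakly_converges (\<lambda>n. v (r1 n) i) (v1 i)" "KKT x1 v1"
    and r2: "strict_mono r2" "weakly_converges (\<lambda>n. x (r2 n)) x2"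
      "\<forall>i<m. weakly_converges (\<lambda>n. v (r2 n) i) (v2 i)" "KKT x2 v2"
  shows "x1 = x2"
proof -
  define d where "d = x1 - x2"
  define e where "e i = v1 i - v2 i" for i
  define c where "c = M_inner x1 v1 x1 v1 - M_inner x2 v2 x2 v2"
  have "energy x2 v2 k - energy x1 v1 k
      = 2 * (M_inner (x k) (v k) x1 v1 - M_inner (x k) (v k) x2 v2) - c" for k
    unfolding energy_def M_inner_self_diff c_def by simp
  then have "energy x2 v2 k - energy x1 v1 k = 2 * M_inner (x k) (v k) d e - c" for k
    unfolding M_inner_diff_right d_def e_def .
  moreover obtain l1 l2 where "(\<lambda>k. energy x1 v1 k) \<longlonglongrightarrow> l1" "(\<lambda>k. energy x2 v2 k) \<longlonglongrightarrow> l2"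
    using energy_convergent[OF r1(4)] energy_convergent[OF r2(4)] unfolding convergent_def by blast
  ultimately have "(\<lambda>k. 2 * M_inner (x k) (v k) d e - c) \<longlonglongrightarrow> l2 - l1"
    using tendsto_diff by fastforce
  from tendsto_divide[OF tendsto_add[OF this tendsto_const[of c]] tendsto_const[of 2]]
  have lim: "(\<lambda>k. M_inner (x k) (v k) d e) \<longlonglongrightarrow> (l2 - l1 + c) / 2" by simp
  have "M_inner xj vj d e = (l2 - l1 + c) / 2"
    if "strict_mono rj" "weakly_converges (\<lambda>n. x (rj n)) xj"
      "\<forall>i<m. weakly_converges (\<lambda>n. v (rj n) i) (vj i)" for rj xj vj
  proof (rule LIMSEQ_unique)
    show "(\<lambda>n. M_inner (x (rj n)) (v (rj n)) d e) \<longlonglongrightarrow> M_inner xj vj d e"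
      using that by (intro M_inner_weakly_continuous) auto
    show "(\<lambda>n. M_inner (x (rj n)) (v (rj n)) d e) \<longlonglongrightarrow> (l2 - l1 + c) / 2"
      using LIMSEQ_subseq_LIMSEQ[OF lim that(1)] by (simp add: o_def)
  qed
  then have "M_inner x1 v1 d e = (l2 - l1 + c) / 2" "M_inner x2 v2 d e = (l2 - l1 + c) / 2"
    using r1 r2 by blast+
  then have "M_inner d e d e = 0"
    using M_inner_diff_left[of x1 v1 d e x2 v2] unfolding d_def e_def by simp
  moreover obtain \<epsilon> where "\<epsilon> > 0"
    and "\<epsilon> * (norm d^2 + (\<Sum>i<m. norm (e i)^2)) \<le> M_inner d e d e - L/2 * norm d^2"
    using M_inner_coercive by blast
  moreover have "0 \<le> L/2 * norm d^2" using L_pos by simp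
  ultimately have "norm d^2 + (\<Sum>i<m. norm (e i)^2) \<le> 0"
    by (smt (verit) mult_pos_pos)
  moreover have "0 \<le> (\<Sum>i<m. norm (e i)^2)" by (simp add: sum_nonneg)
  ultimately have "norm d^2 \<le> 0" by linarith
  then show ?thesis unfolding d_def by simp
qed

lemma x_weakly_converges_KKT: "\<exists>xs vs. KKT xs vs \<and> weakly_converges x xs"
proof -
  obtain r1 x1 v1 where c1: "strict_mono r1" "weakly_converges (\<lambda>n. x (r1 n)) x1"
     "\<forall>i<m. weakly_converges (\<lambda>n. v (r1 n) i) (v1 i)" "KKT x1 v1"
    using weak_cluster_exists[OF strict_mono_id] by auto
  have "\<exists>r. strict_mono r \<and> weakly_converges (\<lambda>n. x (q (r n))) x1"
    if q: "strict_mono q" for q :: "nat \<Rightarrow> nat"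
  proof -
    obtain r x2 v2 where c2: "strict_mono r" "weakly_converges (\<lambda>n. x (q (r n))) x2"
      "\<forall>i<m. weakly_converges (\<lambda>n. v (q (r n)) i) (v2 i)" "KKT x2 v2"
      using weak_cluster_exists[OF q] by blast
    have "x1 = x2" using weak_cluster_unique[OF c1, of "q \<circ> r"] strict_mono_o[OF q c2(1)] c2
      by (simp add: o_def)
    then show ?thesis using c2 by blast
  qed
  then show ?thesis using weakly_converges_if_all_subseqs c1(4) by blast
qed

lemma KKT_imp_minimizer:
  assumes K: "KKT xs vs"
  shows "ereal (f xs) + g xs + (\<Sum>i<m. h i (B i xs)) \<le> ereal (f z) + g z + (\<Sum>i<m. h i (B i z))"
proof -
  define p where "p = - Df xs - (\<Sum>i<m. adjoint (B i) (vs i))"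
  have gs: "p \<in> subdiff_on UNIV g xs"
    and hs: "\<And>i. i < m \<Longrightarrow> vs i \<in> subdiff_on (V i) (h i) (B i xs)"
    using K unfolding KKT_def p_def by auto
  obtain G where G: "g xs = ereal G" using gs unfolding subdiff_on_def by (cases "g xs") auto
  then have gz: "ereal (G + inner p (z - xs)) \<le> g z" using gs unfolding subdiff_on_def by auto
  define H where "H i = real_of_ereal (h i (B i xs))" for i
  have H: "h i (B i xs) = ereal (H i)" if "i < m" for i
    using hs[OF that] unfolding subdiff_on_def H_def by (cases "h i (B i xs)") auto
  have "ereal (H i + inner (vs i) (B i z - B i xs)) \<le> h i (B i z)" if i: "i < m" for i
    using hs[OF i] H[OF i] B_range[OF i] unfolding subdiff_on_def by auto
  then have hz: "ereal (\<Sum>i<m. H i + inner (vs i) (B i z - B i xs)) \<le> (\<Sum>i<m. h i (B i z))"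
    unfolding sum_ereal[symmetric] by (intro sum_mono) auto
  have "(\<Sum>i<m. h i (B i xs)) = ereal (\<Sum>i<m. H i)"
    unfolding sum_ereal[symmetric] using H by (intro sum.cong) auto
  moreover have "f xs + G + (\<Sum>i<m. H i)
      \<le> f z + (G + inner p (z - xs)) + (\<Sum>i<m. H i + inner (vs i) (B i z - B i xs))"
  proof -
    have "inner p (z - xs) = - inner (Df xs) (z - xs) - (\<Sum>i<m. inner (vs i) (B i (z - xs)))"
      unfolding p_def by (simp add: inner_diff_left inner_sum_adjoint_B)
    moreover have "(\<Sum>i<m. H i + inner (vs i) (B i z - B i xs))
        = (\<Sum>i<m. H i) + (\<Sum>i<m. inner (vs i) (B i (z - xs)))"
      by (simp add: sum.distrib B_diff)
    ultimately show ?thesis using convex_gradient_ineq[OF f_conv f_grad, of xs z] by argo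
  qed
  ultimately have "ereal (f xs) + g xs + (\<Sum>i<m. h i (B i xs))
      \<le> ereal (f z) + ereal (G + inner p (z - xs)) + ereal (\<Sum>i<m. H i + inner (vs i) (B i z - B i xs))"
    unfolding G by simp
  also have "\<dots> \<le> ereal (f z) + g z + (\<Sum>i<m. h i (B i z))"
    by (intro add_mono gz hz order_refl)
  finally show ?thesis .
qed

end

theorem theorem4p6:
  fixes f :: "'a::{real_inner,complete_space} \<Rightarrow> real"
    and Df :: "'a \<Rightarrow> 'a"
    and g :: "'a \<Rightarrow> ereal"
    and m :: nat
    and V :: "nat \<Rightarrow> 'b::{real_inner,complete_space} set"
    and h :: "nat \<Rightarrow> 'b \<Rightarrow> ereal"
    and B :: "nat \<Rightarrow> 'a \<Rightarrow> 'b"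
    and L \<gamma> \<sigma> \<tau> :: real
    and w :: "nat \<Rightarrow> real"
    and x :: "nat \<Rightarrow> 'a"
    and y :: "nat \<Rightarrow> nat \<Rightarrow> 'b"
  assumes f_conv: "convex_on UNIV f"
    and f_grad: "\<And>z. (f has_derivative (\<lambda>d. inner (Df z) d)) (at z)"
    and L_pos: "0 < L"
    and Df_lip: "\<And>u v. norm (Df u - Df v) \<le> L * norm (u - v)"
    and g_G0: "Gamma0_on UNIV g"
    and V_sub: "\<And>i. i < m \<Longrightarrow> subspace (V i) \<and> closed (V i)"
    and h_G0: "\<And>i. i < m \<Longrightarrow> Gamma0_on (V i) (h i)"
    and B_lin: "\<And>i. i < m \<Longrightarrow> bounded_linear (B i)"
    and B_range: "\<And>i z. i < m \<Longrightarrow> B i z \<in> V i"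
    and sol_exists: "\<exists>xh v u. v \<in> subdiff_on UNIV g xh
        \<and> (\<forall>i<m. u i \<in> subdiff_on (V i) (h i) (B i xh))
        \<and> Df xh + v + (\<Sum>i<m. adjoint (B i) (u i)) = 0"
    and w_range: "\<And>i. i < m \<Longrightarrow> 0 < w i \<and> w i < 1"
    and w_sum: "(\<Sum>i<m. w i) = 1"
    and gamma_range: "0 < \<gamma>" "\<gamma> < 2 / L"
    and sigma_pos: "0 < \<sigma>" and tau_pos: "0 < \<tau>"
    and step_cond: "\<sigma> * \<tau> * (\<Sum>i<m. w i * (onorm (B i))^2) < 1"
    and y0: "\<And>i. i < m \<Longrightarrow> y 0 i \<in> V i"
    and x_iter: "\<And>k. x (Suc k) = prox_on UNIV (\<tau> * \<gamma> / (1 + \<tau>)) g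
        ((1 / (1 + \<tau>)) *\<^sub>R (x k - \<tau> *\<^sub>R (\<Sum>i<m. w i *\<^sub>R adjoint (B i) (y k i))
            + \<tau> *\<^sub>R (x k - \<gamma> *\<^sub>R Df (x k))))"
    and y_iter: "\<And>k i. i < m \<Longrightarrow> y (Suc k) i = (\<gamma> / w i) *\<^sub>R
        prox_on (V i) (w i * \<sigma> / \<gamma>) (conj_on (V i) (h i))
          ((w i / \<gamma>) *\<^sub>R (y k i + \<sigma> *\<^sub>R B i (2 *\<^sub>R x (Suc k) - x k)))"
  shows "\<exists>xs. (\<forall>z. ereal (f xs) + g xs + (\<Sum>i<m. h i (B i xs))
                  \<le> ereal (f z) + g z + (\<Sum>i<m. h i (B i z)))
            \<and> weakly_converges x xs"
proof -
  interpret primal_dual_iteration f Df g m V h B L \<gamma> \<sigma> \<tau> w x y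
    by (rule primal_dual_iteration.intro) (fact assms)+
  obtain xs vs where "KKT xs vs" and "weakly_converges x xs"
    using x_weakly_converges_KKT by blast
  then show ?thesis using KKT_imp_minimizer by blast
qed

end
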